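(* Let $\eta>0$ and consider the ODE on $\mathbb R^{|\mathcal S\times\mathcal A|}$ $$\dot Q_t=T(Q_t)-g_\eta(f(Q_t))\,e-Q_t .$$ This ODE is globally asymptotically stable and every solution satisfies $Q_t\to q^*$ as $t\to\infty$, where $q^*$ is the unique function satisfying $q^*(s,a)=r(s,a)-\rho^*+\sum_{s'}p(s'\mid s,a)\max_{a'}q^*(s',a')$ for all $(s,a)$ and $\rho^*=f(q^* )$, with $\rho^*$ the optimal average reward.
   Context: A finite MDP $(\mathcal S,\mathcal A,r,p)$, $\|r\|_\infty=\max_{s,a}|r(s,a)|$, such that for every stationary policy the induced Markov chain is ergodic; $\rho^*=\max_\pi \lim_{T\to\infty}\frac1T\mathbb E_\pi[\sum_{t=0}^T r(S_t,A_t)]$. $e$ is the all-ones vector. $T(Q)(s,a)=r(s,a)+\sum_{s'}p(s'\mid s,a)\max_{a'}Q(s',a')$. $f:\mathbb R^{|\mathcal S\times\mathcal A|}\to\mathbb R$ is Lipschitz and there is $u>0$ with $f(e)=u$, $f(x+ce)=f(x)+cu$, $f(cx)=cf(x)$ for all $c\in\mathbb R$, $x$. The clip function is $g_\eta(x)=\min\{\max\{x,-\|r\|_\infty-\eta\},\|r\|_\infty+\eta\}$. *)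

theory Defs
  imports "HOL-Analysis.Analysis"
begin

text \<open>Finite MDP with state type 's and action type 'a (both finite).
  Rewards r s a, transition probabilities p s a s'.  Functions on S x A
  are vectors of type real ^ ('s \<times> 'a).\<close>

definition is_mdp :: "('s::finite \<Rightarrow> 'a::finite \<Rightarrow> 's \<Rightarrow> real) \<Rightarrow> bool" where
  "is_mdp p \<longleftrightarrow> (\<forall>s a s'. 0 \<le> p s a s') \<and> (\<forall>s a. (\<Sum>s'\<in>UNIV. p s a s') = 1)"

text \<open>Ergodicity (Puterman): for every deterministic stationary policy the induced
  chain consists of a single recurrent class, i.e. (finite chain) it is irreducible.\<close>
definition ergodic_mdp :: "('s::finite \<Rightarrow> 'a::finite \<Rightarrow> 's \<Rightarrow> real) \<Rightarrow> bool" where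
  "ergodic_mdp p \<longleftrightarrow>
     (\<forall>\<pi>::'s \<Rightarrow> 'a. \<forall>s s'. (s, s') \<in> {(x, y). 0 < p x (\<pi> x) y}\<^sup>+)"

text \<open>Markov randomized (possibly non-stationary) policies: pi t s a is the
  probability of choosing a in s at time t.\<close>
definition markov_policy :: "(nat \<Rightarrow> 's::finite \<Rightarrow> 'a::finite \<Rightarrow> real) \<Rightarrow> bool" where
  "markov_policy \<pi> \<longleftrightarrow> (\<forall>t s a. 0 \<le> \<pi> t s a) \<and> (\<forall>t s. (\<Sum>a\<in>UNIV. \<pi> t s a) = 1)"

primrec state_dist ::
  "('s::finite \<Rightarrow> 'a::finite \<Rightarrow> 's \<Rightarrow> real) \<Rightarrow> (nat \<Rightarrow> 's \<Rightarrow> 'a \<Rightarrow> real) \<Rightarrow> 's \<Rightarrow> nat \<Rightarrow> 's \<Rightarrow> real" where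
  "state_dist p \<pi> s0 0 = (\<lambda>s. if s = s0 then 1 else 0)"
| "state_dist p \<pi> s0 (Suc t) =
     (\<lambda>s'. \<Sum>s\<in>UNIV. \<Sum>a\<in>UNIV. state_dist p \<pi> s0 t s * \<pi> t s a * p s a s')"

definition exp_reward ::
  "('s::finite \<Rightarrow> 'a::finite \<Rightarrow> real) \<Rightarrow> ('s \<Rightarrow> 'a \<Rightarrow> 's \<Rightarrow> real) \<Rightarrow> (nat \<Rightarrow> 's \<Rightarrow> 'a \<Rightarrow> real)
    \<Rightarrow> 's \<Rightarrow> nat \<Rightarrow> real" where
  "exp_reward r p \<pi> s0 t = (\<Sum>s\<in>UNIV. \<Sum>a\<in>UNIV. state_dist p \<pi> s0 t s * \<pi> t s a * r s a)"

definition avg_reward ::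
  "('s::finite \<Rightarrow> 'a::finite \<Rightarrow> real) \<Rightarrow> ('s \<Rightarrow> 'a \<Rightarrow> 's \<Rightarrow> real) \<Rightarrow> (nat \<Rightarrow> 's \<Rightarrow> 'a \<Rightarrow> real)
    \<Rightarrow> 's \<Rightarrow> nat \<Rightarrow> real" where
  "avg_reward r p \<pi> s0 T = (\<Sum>t\<le>T. exp_reward r p \<pi> s0 t) / real T"

definition opt_avg_reward ::
  "('s::finite \<Rightarrow> 'a::finite \<Rightarrow> real) \<Rightarrow> ('s \<Rightarrow> 'a \<Rightarrow> 's \<Rightarrow> real) \<Rightarrow> 's \<Rightarrow> real" where
  "opt_avg_reward r p s0 =
     Sup {L. \<exists>\<pi>. markov_policy \<pi> \<and> (avg_reward r p \<pi> s0 \<longlonglongrightarrow> L)}"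

definition rnorm :: "('s::finite \<Rightarrow> 'a::finite \<Rightarrow> real) \<Rightarrow> real" where
  "rnorm r = Max {\<bar>r s a\<bar> | s a. True}"

definition allones :: "real ^ ('s::finite \<times> 'a::finite)" where
  "allones = (\<chi> i. 1)"

definition Tbell ::
  "('s::finite \<Rightarrow> 'a::finite \<Rightarrow> real) \<Rightarrow> ('s \<Rightarrow> 'a \<Rightarrow> 's \<Rightarrow> real)
     \<Rightarrow> real ^ ('s \<times> 'a) \<Rightarrow> real ^ ('s \<times> 'a)" where
  "Tbell r p Q = (\<chi> i. r (fst i) (snd i) + (\<Sum>s'\<in>UNIV. p (fst i) (snd i) s' * (MAX a'. Q $ (s', a'))))"

definition clip :: "real \<Rightarrow> real \<Rightarrow> real \<Rightarrow> real" where
  "clip R \<eta> x = min (max x (- R - \<eta>)) (R + \<eta>)"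

definition ode_solution :: "('v::real_normed_vector \<Rightarrow> 'v) \<Rightarrow> (real \<Rightarrow> 'v) \<Rightarrow> bool" where
  "ode_solution F Q \<longleftrightarrow> (\<forall>t\<ge>0. (Q has_vector_derivative F (Q t)) (at t within {0..}))"

definition globally_asymptotically_stable :: "('v::real_normed_vector \<Rightarrow> 'v) \<Rightarrow> 'v \<Rightarrow> bool" where
  "globally_asymptotically_stable F x0 \<longleftrightarrow>
     F x0 = 0 \<and>
     (\<forall>\<epsilon>>0. \<exists>\<delta>>0. \<forall>Q. ode_solution F Q \<and> dist (Q 0) x0 < \<delta> \<longrightarrow> (\<forall>t\<ge>0. dist (Q t) x0 < \<epsilon>)) \<and>
     (\<forall>Q. ode_solution F Q \<longrightarrow> (Q \<longlongrightarrow> x0) at_top)"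

end

theory Submission
  imports Defs "HOL-Real_Asymp.Real_Asymp"
begin

text \<open>
  The average-reward optimality equation has a solution by vanishing discount: the relative
  values of the discounted problems stay bounded, because under ergodicity every state is reached
  from a minimising state along positive-probability transitions of an optimal policy, and a limit
  point solves the equation. Two solutions differ by a constant, since the difference of their state
  values is subharmonic for the greedy policy of one of them; the normalisation \<open>f q = \<rho>\<close> fixes
  the constant, and a telescoping argument identifies \<open>\<rho>\<close> with the optimal average reward.

  For the ODE write \<open>Q\<^sub>t = q + y\<^sub>t - k\<^sub>t e\<close> with \<open>k\<^sub>t = \<integral>\<^sub>0\<^sup>t (clip (f Q\<^sub>s) - \<rho>) ds\<close>. Then
  \<open>y' = T\<^sub>q y - y\<close> with \<open>T\<^sub>q y = T (q + y) - T q\<close>, which is monotone and commutes with constants;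
  so \<open>max y\<close> decreases, \<open>min y\<close> increases, and ergodicity makes the spread \<open>max y - min y\<close> drop by
  a fixed amount over every time interval of length \<open>|S| + 1\<close> while it is large. Hence \<open>y\<close>
  converges to a constant vector \<open>L e\<close>, and \<open>k\<close> solves a clipped scalar equation
  \<open>k' = clip (\<rho> + \<epsilon>\<^sub>t - u (k - L)) - \<rho>\<close> with \<open>\<epsilon>\<^sub>t \<rightarrow> 0\<close>, so \<open>k \<rightarrow> L\<close> and \<open>Q \<rightarrow> q\<close>. Stability
  follows from \<open>\<parallel>y\<^sub>t\<parallel>\<^sub>\<infinity> \<le> \<parallel>y\<^sub>0\<parallel>\<^sub>\<infinity>\<close> and the Lipschitz bound on \<open>f\<close>, which keeps \<open>k\<close> in check.
\<close>

lemma Max_UNIV_ge: "(f :: 'a::finite \<Rightarrow> 'b::linorder) a \<le> (MAX a. f a)"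
  by simp

lemma Max_UNIV_attained: "\<exists>a. (MAX a. (f :: 'a::finite \<Rightarrow> 'b::linorder) a) = f a"
proof -
  have "(MAX a. f a) \<in> range f" by (rule Max_in) auto
  then show ?thesis by blast
qed

lemma Min_UNIV_attained: "\<exists>a. (MIN a. (f :: 'a::finite \<Rightarrow> 'b::linorder) a) = f a"
proof -
  have "(MIN a. f a) \<in> range f" by (rule Min_in) auto
  then show ?thesis by blast
qed

lemma ex_Max_UNIV: "\<exists>m. \<forall>s. (f :: 'a::finite \<Rightarrow> 'b::linorder) s \<le> f m"
  using Max_UNIV_attained[of f] by (metis Max_UNIV_ge)

lemma ex_Min_UNIV: "\<exists>m. \<forall>s. (f :: 'a::finite \<Rightarrow> 'b::linorder) m \<le> f s"
proof -
  obtain m where "(MIN a. f a) = f m" using Min_UNIV_attained by blast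
  moreover have "(MIN a. f a) \<le> f s" for s by (rule Min_le) auto
  ultimately show ?thesis by metis
qed

lemma Max_UNIV_le_iff: "(MAX a. (f :: 'a::finite \<Rightarrow> 'b::linorder) a) \<le> c \<longleftrightarrow> (\<forall>a. f a \<le> c)"
  by simp

lemma Max_UNIV_add_const:
  "(MAX a. (f :: 'a::finite \<Rightarrow> 'b::linordered_ab_semigroup_add) a + k) = (MAX a. f a) + k"
  using Max_add_commute[of UNIV f k] by simp

lemma Max_UNIV_uminus: "(MAX k. - (f :: 'a::finite \<Rightarrow> real) k) = - (MIN k. f k)"
proof (rule antisym)
  show "(MAX k. - f k) \<le> - (MIN k. f k)" by (simp add: Max_UNIV_le_iff)
  obtain k0 where "(MIN k. f k) = f k0" using Min_UNIV_attained by blast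
  then show "- (MIN k. f k) \<le> (MAX k. - f k)" using Max_UNIV_ge[of "\<lambda>k. - f k" k0] by simp
qed

lemma Min_le_Max_UNIV: "(MIN j. (f :: 'a::finite \<Rightarrow> 'b::linorder) j) \<le> (MAX j. f j)"
proof -
  have "(MIN j. f j) \<le> f undefined" by (rule Min_le) auto
  then show ?thesis using Max_UNIV_ge[of f undefined] by order
qed

lemma abs_Max_UNIV_le: "(\<And>a. \<bar>(f :: 'a::finite \<Rightarrow> real) a\<bar> \<le> c) \<Longrightarrow> \<bar>MAX a. f a\<bar> \<le> c"
  using Max_UNIV_attained[of f] by (metis)

lemma ex_Max_selector:
  "\<exists>\<pi>. \<forall>s. (MAX a. (g :: 's \<Rightarrow> 'a::finite \<Rightarrow> 'b::linorder) s a) = g s (\<pi> s)"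
  using Max_UNIV_attained[of "g _"] by metis

lemma tendsto_Max:
  fixes g :: "'a \<Rightarrow> 'b \<Rightarrow> real"
  assumes "finite A" "A \<noteq> {}" "\<And>a. a \<in> A \<Longrightarrow> ((\<lambda>n. g a n) \<longlongrightarrow> l a) F"
  shows "((\<lambda>n. Max ((\<lambda>a. g a n) ` A)) \<longlongrightarrow> Max (l ` A)) F"
  using assms
proof (induction A rule: finite_ne_induct)
  case (insert x A)
  have "((\<lambda>n. max (g x n) (Max ((\<lambda>a. g a n) ` A))) \<longlongrightarrow> max (l x) (Max (l ` A))) F"
    by (intro tendsto_max) (use insert in auto)
  then show ?case using insert by (simp add: Max_insert)
qed simp

lemma tendsto_Max_UNIV:
  fixes g :: "'a::finite \<Rightarrow> 'b \<Rightarrow> real"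
  shows "(\<And>a. ((\<lambda>n. g a n) \<longlongrightarrow> l a) F) \<Longrightarrow> ((\<lambda>n. MAX a. g a n) \<longlongrightarrow> (MAX a. l a)) F"
  using tendsto_Max[where A=UNIV and g=g and l=l and F=F] by auto

lemma continuous_on_Max:
  fixes g :: "'a \<Rightarrow> 'b::topological_space \<Rightarrow> real"
  assumes "finite A" "A \<noteq> {}" "\<And>a. a \<in> A \<Longrightarrow> continuous_on S (g a)"
  shows "continuous_on S (\<lambda>x. Max ((\<lambda>a. g a x) ` A))"
  using assms
proof (induction A rule: finite_ne_induct)
  case (insert x A)
  have "continuous_on S (\<lambda>n. max (g x n) (Max ((\<lambda>a. g a n) ` A)))"
    by (intro continuous_on_max) (use insert in auto)
  then show ?case using insert by (simp add: Max_insert)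
qed simp

lemma continuous_on_Max_UNIV:
  fixes g :: "'a::finite \<Rightarrow> 'b::topological_space \<Rightarrow> real"
  shows "(\<And>a. continuous_on S (g a)) \<Longrightarrow> continuous_on S (\<lambda>x. MAX a. g a x)"
  using continuous_on_Max[where A=UNIV and g=g and S=S] by auto

section \<open>Differential inequalities\<close>

lemma closed_Collect_le_on:
  fixes g h :: "real \<Rightarrow> real"
  assumes "continuous_on {a..b} g" "continuous_on {a..b} h"
  shows "closed {t\<in>{a..b}. g t \<le> h t}"
proof -
  have "closed ({a..b} \<inter> (\<lambda>t. h t - g t) -` {0..})"
    by (rule continuous_closed_preimage) (auto intro!: continuous_intros assms)
  moreover have "{t\<in>{a..b}. g t \<le> h t} = {a..b} \<inter> (\<lambda>t. h t - g t) -` {0..}" by auto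
  ultimately show ?thesis by simp
qed

lemma linear_ode_comparison:
  fixes \<phi> D :: "real \<Rightarrow> real"
  assumes ab: "a \<le> b" and cont: "continuous_on {a..b} \<phi>"
    and der: "\<And>t. a < t \<Longrightarrow> t < b \<Longrightarrow> (\<phi> has_real_derivative D t) (at t)"
    and ineq: "\<And>t. a < t \<Longrightarrow> t < b \<Longrightarrow> \<beta> - \<phi> t \<le> D t"
  shows "\<beta> + (\<phi> a - \<beta>) * exp (-(b - a)) \<le> \<phi> b"
proof -
  define \<psi> where "\<psi> t = exp t * (\<phi> t - \<beta>)" for t
  have "\<psi> a \<le> \<psi> b"
  proof (rule DERIV_nonneg_imp_increasing_open[OF ab])
    fix t assume t: "a < t" "t < b"
    have "(\<psi> has_real_derivative (exp t * (\<phi> t - \<beta> + D t))) (at t)"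
      unfolding \<psi>_def by (auto intro!: derivative_eq_intros der t simp: algebra_simps)
    moreover have "0 \<le> exp t * (\<phi> t - \<beta> + D t)" using ineq[OF t] by simp
    ultimately show "\<exists>y. (\<psi> has_real_derivative y) (at t) \<and> 0 \<le> y" by blast
  qed (unfold \<psi>_def, intro continuous_intros cont)
  then have "(\<phi> a - \<beta>) * exp (-(b - a)) \<le> \<phi> b - \<beta>"
    unfolding \<psi>_def by (simp add: exp_diff exp_minus field_simps)
  then show ?thesis by linarith
qed

lemma first_crossing:
  fixes g :: "'n::finite \<Rightarrow> real \<Rightarrow> real" and h :: "real \<Rightarrow> real"
  assumes t01: "t0 \<le> t1" and cont: "\<And>k. continuous_on {t0..t1} (g k)" "continuous_on {t0..t1} h"
    and start: "\<And>k. g k t0 < h t0" and hit: "h t1 \<le> g j t1"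
  obtains ts i where "t0 < ts" "ts \<le> t1" "g i ts = h ts" "\<And>k. g k ts \<le> h ts"
    "\<And>t k. t0 \<le> t \<Longrightarrow> t < ts \<Longrightarrow> g k t < h t"
proof -
  define S where "S = {t\<in>{t0..t1}. \<exists>k. h t \<le> g k t}"
  have closed: "closed S"
  proof -
    have "S = (\<Union>k\<in>UNIV. {t\<in>{t0..t1}. h t \<le> g k t})" unfolding S_def by auto
    moreover have "closed {t\<in>{t0..t1}. h t \<le> g k t}" for k by (intro closed_Collect_le_on cont)
    ultimately show ?thesis by (simp only:) (intro closed_UN ballI, simp_all)
  qed
  have t1S: "t1 \<in> S" unfolding S_def using t01 hit by auto
  have bdd: "bdd_below S" unfolding S_def by (auto intro: bdd_belowI[of _ t0])
  define ts where "ts = Inf S"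
  have tsS: "ts \<in> S" unfolding ts_def using closed_contains_Inf[OF _ bdd closed] t1S by blast
  then have ts: "t0 \<le> ts" "ts \<le> t1" unfolding S_def by auto
  have before: "g k t < h t" if "t0 \<le> t" "t < ts" for t k
  proof (rule ccontr)
    assume "\<not> ?thesis"
    then have "h t \<le> g k t" by simp
    then have "t \<in> S" unfolding S_def using that ts by auto
    then have "ts \<le> t" unfolding ts_def by (rule cInf_lower[OF _ bdd])
    then show False using that by simp
  qed
  have ts0: "t0 < ts"
  proof (rule ccontr)
    assume "\<not> t0 < ts"
    then have "ts = t0" using ts by simp
    then obtain k where "h t0 \<le> g k t0" using tsS unfolding S_def by auto
    then show False using start[of k] by simp
  qed
  have at_ts: "g k ts \<le> h ts" for k
  proof -
    have "{t0..<ts} \<subseteq> {t\<in>{t0..t1}. g k t \<le> h t}" using before ts by (auto intro: less_imp_le)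
    then have "closure {t0..<ts} \<subseteq> {t\<in>{t0..t1}. g k t \<le> h t}"
      by (intro closure_minimal closed_Collect_le_on cont)
    moreover have "ts \<in> closure {t0..<ts}" using ts0 by simp
    ultimately show ?thesis by blast
  qed
  obtain i where "h ts \<le> g i ts" using tsS unfolding S_def by auto
  with at_ts[of i] have "g i ts = h ts" by simp
  with that ts0 ts(2) at_ts before show ?thesis by blast
qed

text \<open>At a first crossing of the barrier the crossing component is maximal, so its
  derivative is at most \<open>0 < \<epsilon>\<close>.\<close>

lemma component_below_linear_barrier:
  fixes y :: "real \<Rightarrow> real^'n"
  assumes cont: "\<And>j. continuous_on {t0..} (\<lambda>t. y t $ j)"
    and der: "\<And>j t. t0 < t \<Longrightarrow> ((\<lambda>t. y t $ j) has_real_derivative D j t) (at t)"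
    and bd: "\<And>j t. t0 < t \<Longrightarrow> D j t \<le> (MAX k. y t $ k) - y t $ j"
    and t01: "t0 \<le> t1" and e: "0 < \<epsilon>"
  shows "y t1 $ j < (MAX k. y t0 $ k) + \<epsilon> * (t1 - t0 + 1)"
proof (rule ccontr)
  assume crossed: "\<not> ?thesis"
  define B where "B t = (MAX k. y t0 $ k) + \<epsilon> * (t - t0 + 1)" for t
  obtain ts i where ts: "t0 < ts" "ts \<le> t1" "y ts $ i = B ts" "\<And>k. y ts $ k \<le> B ts"
    and before: "\<And>t. t0 \<le> t \<Longrightarrow> t < ts \<Longrightarrow> y t $ i < B t"
  proof (rule first_crossing[of t0 t1 "\<lambda>k t. y t $ k" B j])
    show "continuous_on {t0..t1} (\<lambda>t. y t $ k)" for k by (rule continuous_on_subset[OF cont]) auto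
    show "continuous_on {t0..t1} B" unfolding B_def by (intro continuous_intros)
    show "y t0 $ k < B t0" for k unfolding B_def using Max_UNIV_ge[of "\<lambda>k. y t0 $ k" k] e
      by (simp only: diff_self add_0_left mult_1_right)
  qed (use t01 crossed B_def in auto)
  have "(MAX k. y ts $ k) \<le> B ts" using ts(4) by (simp add: Max_UNIV_le_iff)
  then have neg: "D i ts - \<epsilon> < 0" using bd[OF ts(1), of i] ts(3) e by linarith
  have "((\<lambda>t. y t $ i - B t) has_real_derivative (D i ts - \<epsilon>)) (at ts)"
    unfolding B_def by (auto intro!: derivative_eq_intros der ts(1))
  from DERIV_neg_dec_left[OF this neg] obtain d where d: "d > 0"
    "\<And>h. h > 0 \<Longrightarrow> h < d \<Longrightarrow> y ts $ i - B ts < y (ts - h) $ i - B (ts - h)" by blast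
  define h where "h = min d (ts - t0) / 2"
  have h: "h > 0" "h < d" "t0 \<le> ts - h" "ts - h < ts" unfolding h_def using d(1) ts(1)
    by (auto simp: min_def field_simps)
  have "y (ts - h) $ i < B (ts - h)" using before h(3,4) .
  moreover have "y ts $ i - B ts < y (ts - h) $ i - B (ts - h)" using d(2) h(1,2) .
  ultimately show False using ts(3) by simp
qed

lemma Max_component_nonincreasing:
  fixes y :: "real \<Rightarrow> real^'n"
  assumes cont: "\<And>j. continuous_on {t0..} (\<lambda>t. y t $ j)"
    and der: "\<And>j t. t0 < t \<Longrightarrow> ((\<lambda>t. y t $ j) has_real_derivative D j t) (at t)"
    and bd: "\<And>j t. t0 < t \<Longrightarrow> D j t \<le> (MAX k. y t $ k) - y t $ j"
    and t01: "t0 \<le> t1"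
  shows "y t1 $ j \<le> (MAX k. y t0 $ k)"
proof (rule field_le_epsilon)
  fix e :: real assume e: "0 < e"
  have "y t1 $ j < (MAX k. y t0 $ k) + e / (t1 - t0 + 1) * (t1 - t0 + 1)"
    using component_below_linear_barrier[OF cont der bd t01, where \<epsilon>="e / (t1 - t0 + 1)" and j=j]
      e t01
    by simp
  moreover have "e / (t1 - t0 + 1) * (t1 - t0 + 1) = e" using t01 by simp
  ultimately show "y t1 $ j \<le> (MAX k. y t0 $ k) + e" by linarith
qed

lemma Min_component_nondecreasing:
  fixes y :: "real \<Rightarrow> real^'n"
  assumes cont: "\<And>j. continuous_on {t0..} (\<lambda>t. y t $ j)"
    and der: "\<And>j t. t0 < t \<Longrightarrow> ((\<lambda>t. y t $ j) has_real_derivative D j t) (at t)"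
    and bd: "\<And>j t. t0 < t \<Longrightarrow> (MIN k. y t $ k) - y t $ j \<le> D j t"
    and t01: "t0 \<le> t1"
  shows "(MIN k. y t0 $ k) \<le> y t1 $ j"
proof -
  have "(- y t1) $ j \<le> (MAX k. (- y t0) $ k)"
  proof (rule Max_component_nonincreasing[where D="\<lambda>j t. - D j t"])
    show "continuous_on {t0..} (\<lambda>t. (- y t) $ j)" for j
      using cont[of j] by (simp add: continuous_on_minus)
    show "((\<lambda>t. (- y t) $ j) has_real_derivative - D j t) (at t)" if "t0 < t" for j t
      using der[OF that, of j] by (auto intro!: derivative_eq_intros)
    show "- D j t \<le> (MAX k. (- y t) $ k) - (- y t) $ j" if "t0 < t" for j t
      using bd[OF that, of j] unfolding vector_uminus_component Max_UNIV_uminus by linarith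
  qed (rule t01)
  then show ?thesis unfolding vector_uminus_component Max_UNIV_uminus by linarith
qed

lemma stays_below:
  fixes g D :: "real \<Rightarrow> real"
  assumes cont: "continuous_on {t1..} g"
    and der: "\<And>t. t1 < t \<Longrightarrow> (g has_real_derivative D t) (at t)"
    and nonpos: "\<And>t. t1 < t \<Longrightarrow> \<beta> < g t \<Longrightarrow> D t \<le> 0"
    and start: "g t1 \<le> \<beta>" and tt: "t1 \<le> t"
  shows "g t \<le> \<beta>"
proof (rule ccontr)
  assume gt: "\<not> g t \<le> \<beta>"
  define S where "S = {s\<in>{t1..t}. g s \<le> \<beta>}"
  have closed: "closed S" unfolding S_def
    by (intro closed_Collect_le_on continuous_intros continuous_on_subset[OF cont]) auto
  have bdd: "bdd_above S" unfolding S_def by (auto intro: bdd_aboveI[of _ t])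
  define ts where "ts = Sup S"
  have "ts \<in> S" unfolding ts_def
    by (rule closed_contains_Sup) (use start tt S_def bdd closed in auto)
  then have ts: "t1 \<le> ts" "ts \<le> t" "g ts \<le> \<beta>" unfolding S_def by auto
  have after: "\<beta> < g s" if "ts < s" "s \<le> t" for s
  proof (rule ccontr)
    assume "\<not> \<beta> < g s"
    then have "s \<in> S" unfolding S_def using that ts by auto
    then show False using cSup_upper[OF _ bdd] that unfolding ts_def by force
  qed
  have "ts \<noteq> t" using ts(3) gt by auto
  then have "ts < t" using ts(2) by simp
  have "g t \<le> g ts"
  proof (rule DERIV_nonpos_imp_decreasing_open[OF less_imp_le[OF \<open>ts < t\<close>]])
    fix x assume x: "ts < x" "x < t"
    then have "t1 < x" using ts(1) by simp
    then show "\<exists>y. (g has_real_derivative y) (at x) \<and> y \<le> 0"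
      using der nonpos after[of x] x by auto
  qed (rule continuous_on_subset[OF cont], use ts in auto)
  then show False using ts(3) gt by simp
qed

lemma eventually_below:
  fixes g D :: "real \<Rightarrow> real"
  assumes cont: "continuous_on {T0..} g"
    and der: "\<And>t. T0 < t \<Longrightarrow> (g has_real_derivative D t) (at t)"
    and dec: "\<And>t. T0 < t \<Longrightarrow> \<beta> \<le> g t \<Longrightarrow> D t \<le> - \<kappa>"
    and k: "0 < \<kappa>"
  shows "\<exists>t1\<ge>T0. g t1 \<le> \<beta>"
proof (rule ccontr)
  assume "\<not> ?thesis"
  then have above: "\<beta> < g t" if "T0 \<le> t" for t using that by force
  define T where "T = T0 + (g T0 - \<beta>) / \<kappa> + 1"
  have TT: "T0 \<le> T" unfolding T_def using above[of T0] k by (simp add: field_simps)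
  have "g T + \<kappa> * T \<le> g T0 + \<kappa> * T0"
  proof (rule DERIV_nonpos_imp_decreasing_open[OF TT, where f="\<lambda>t. g t + \<kappa> * t"])
    fix x assume x: "T0 < x" "x < T"
    have "((\<lambda>t. g t + \<kappa> * t) has_real_derivative D x + \<kappa>) (at x)"
      by (auto intro!: derivative_eq_intros der x)
    moreover have "D x + \<kappa> \<le> 0" using dec[OF x(1)] above[of x] x by auto
    ultimately show "\<exists>y. ((\<lambda>t. g t + \<kappa> * t) has_real_derivative y) (at x) \<and> y \<le> 0" by blast
  qed (intro continuous_intros continuous_on_subset[OF cont], auto)
  moreover have "\<kappa> * (T - T0) = g T0 - \<beta> + \<kappa>" unfolding T_def using k by (simp add: field_simps)
  ultimately have "g T \<le> \<beta> - \<kappa>" by (simp add: algebra_simps)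
  then show False using above[OF TT] k by simp
qed

lemma eventually_always_below:
  fixes g D :: "real \<Rightarrow> real"
  assumes cont: "continuous_on {T0..} g"
    and der: "\<And>t. T0 < t \<Longrightarrow> (g has_real_derivative D t) (at t)"
    and dec: "\<And>t. T0 < t \<Longrightarrow> \<beta> \<le> g t \<Longrightarrow> D t \<le> - \<kappa>"
    and k: "0 < \<kappa>"
  shows "\<exists>t1. \<forall>t\<ge>t1. g t \<le> \<beta>"
proof -
  obtain t1 where t1: "T0 \<le> t1" "g t1 \<le> \<beta>" using eventually_below[OF cont der dec k] by blast
  have "g t \<le> \<beta>" if "t1 \<le> t" for t
  proof (rule stays_below[of t1 g D])
    show "continuous_on {t1..} g" by (rule continuous_on_subset[OF cont]) (use t1 in auto)
    show "(g has_real_derivative D s) (at s)" if "t1 < s" for s using der that t1 by auto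
    show "D s \<le> 0" if "t1 < s" "\<beta> < g s" for s using dec[of s] that t1 k by auto
  qed (use t1 that in auto)
  then show ?thesis by blast
qed

lemma has_real_derivative_integral_atLeast:
  fixes c :: "real \<Rightarrow> real"
  assumes cc: "continuous_on {0..} c" and t: "0 \<le> t"
  shows "((\<lambda>u. integral {0..u} c) has_real_derivative c t) (at t within {0..})"
proof -
  have "((\<lambda>u. integral {0..u} c) has_vector_derivative c t) (at t within {0..t+1})"
    by (rule integral_has_vector_derivative) (use t in \<open>auto intro: continuous_on_subset[OF cc]\<close>)
  moreover have "at t within {0..t+1} = at t within {0..}"
    by (rule at_within_nhd[where S="{t - 1 <..< t + 1}"]) auto
  ultimately show ?thesis by (simp add: has_real_derivative_iff_has_vector_derivative)
qed

lemma has_vector_derivative_at_if_within_atLeast: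
  fixes g :: "real \<Rightarrow> 'b::real_normed_vector"
  assumes "(g has_vector_derivative d) (at t within {0..})" "0 < t"
  shows "(g has_vector_derivative d) (at t)"
  using assms at_within_interior[of t "{0..}"] by simp

section \<open>The average-reward optimality equation\<close>

definition state_max :: "real^('s::finite \<times> 'a::finite) \<Rightarrow> 's \<Rightarrow> real" where
  "state_max Q s = (MAX a. Q $ (s, a))"

definition avg_optimality_eq ::
  "('s::finite \<Rightarrow> 'a::finite \<Rightarrow> real) \<Rightarrow> ('s \<Rightarrow> 'a \<Rightarrow> 's \<Rightarrow> real) \<Rightarrow> real^('s \<times> 'a) \<Rightarrow> real \<Rightarrow> bool"
where
  "avg_optimality_eq r p q \<rho> \<longleftrightarrow>
     (\<forall>s a. q $ (s, a) = r s a - \<rho> + (\<Sum>s'\<in>UNIV. p s a s' * state_max q s'))"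

lemma avg_optimality_eq_iff:
  "avg_optimality_eq r p q \<rho> \<longleftrightarrow>
     (\<forall>s a. q $ (s, a) = r s a - \<rho> + (\<Sum>s'\<in>UNIV. p s a s' * (MAX a'. q $ (s', a'))))"
  unfolding avg_optimality_eq_def state_max_def ..

lemma state_max_ge: "Q $ (s, a) \<le> state_max Q s"
  unfolding state_max_def by (rule Max_UNIV_ge)

lemma state_max_add_const: "state_max (Q + c *\<^sub>R allones) s = state_max Q s + c"
  unfolding state_max_def allones_def by (simp add: Max_UNIV_add_const)

lemma Tbell_nth: "Tbell r p Q $ (s, a) = r s a + (\<Sum>s'\<in>UNIV. p s a s' * state_max Q s')"
  unfolding Tbell_def state_max_def by simp

text \<open>\<open>reach_bound R d k\<close> bounds \<open>V x - V m\<close> for a discounted fixed point \<open>V\<close>, its minimiser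
  \<open>m\<close> and a state \<open>x\<close> reached from \<open>m\<close> in \<open>k\<close> steps of an optimal policy.\<close>

primrec reach_bound :: "real \<Rightarrow> real \<Rightarrow> nat \<Rightarrow> real" where
  "reach_bound R d 0 = 0"
| "reach_bound R d (Suc k) = 2 * (reach_bound R d k + 2 * R) / d"

lemma reach_bound_mono:
  assumes "0 \<le> R" "0 < d" "d \<le> 1" "k \<le> n"
  shows "reach_bound R d k \<le> reach_bound R d n"
proof -
  have nonneg: "0 \<le> reach_bound R d k" for k by (induction k) (use assms in auto)
  have "reach_bound R d k \<le> reach_bound R d (Suc k)" for k
  proof -
    have "reach_bound R d k \<le> 2 * (reach_bound R d k + 2 * R)" using assms nonneg[of k] by auto
    also have "\<dots> \<le> 2 * (reach_bound R d k + 2 * R) / d"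
      using assms nonneg[of k] by (simp add: le_divide_eq mult_left_le)
    finally show ?thesis by simp
  qed
  then show ?thesis using lift_Suc_mono_le[of "reach_bound R d"] assms(4) by blast
qed

lemma abs_mult_le_if_le_divide: "0 < (d::real) \<Longrightarrow> \<bar>v\<bar> \<le> R / d \<Longrightarrow> \<bar>d * v\<bar> \<le> R"
  by (simp add: abs_mult le_divide_eq mult.commute)

definition vanishing_discount :: "nat \<Rightarrow> real" where
  "vanishing_discount n = 1 - 1 / (real n + 2)"

locale ergodic_mdp_model =
  fixes r :: "'s::finite \<Rightarrow> 'a::finite \<Rightarrow> real" and p :: "'s \<Rightarrow> 'a \<Rightarrow> 's \<Rightarrow> real"
  assumes mdp: "is_mdp p" and ergodic: "ergodic_mdp p"
begin

lemma p_nonneg: "0 \<le> p s a s'"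
  using mdp unfolding is_mdp_def by auto

lemma sum_p_eq_1: "(\<Sum>s'\<in>UNIV. p s a s') = 1"
  using mdp unfolding is_mdp_def by auto

lemma sum_p_mult_const: "(\<Sum>s'\<in>UNIV. p s a s' * c) = c"
  by (simp add: sum_distrib_right[symmetric] sum_p_eq_1)

lemma sum_p_mult_diff_const: "(\<Sum>s'\<in>UNIV. p s a s' * (v s' - c)) = (\<Sum>s'\<in>UNIV. p s a s' * v s') - c"
  by (simp add: right_diff_distrib sum_subtractf sum_p_mult_const)

lemma sum_p_mult_le: "(\<And>s'. v s' \<le> c) \<Longrightarrow> (\<Sum>s'\<in>UNIV. p s a s' * v s') \<le> c"
  using sum_mono[of UNIV "\<lambda>s'. p s a s' * v s'" "\<lambda>s'. p s a s' * c"]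
  by (simp add: mult_left_mono p_nonneg sum_p_mult_const)

lemma sum_p_mult_ge: "(\<And>s'. c \<le> v s') \<Longrightarrow> c \<le> (\<Sum>s'\<in>UNIV. p s a s' * v s')"
  using sum_mono[of UNIV "\<lambda>s'. p s a s' * c" "\<lambda>s'. p s a s' * v s'"]
  by (simp add: mult_left_mono p_nonneg sum_p_mult_const)

lemma abs_sum_p_mult_le:
  assumes "\<And>s'. \<bar>v s'\<bar> \<le> c"
  shows "\<bar>\<Sum>s'\<in>UNIV. p s a s' * v s'\<bar> \<le> c"
proof -
  have "(\<Sum>s'\<in>UNIV. p s a s' * v s') \<le> c" by (rule sum_p_mult_le) (use assms abs_le_D1 in blast)
  moreover have "- c \<le> (\<Sum>s'\<in>UNIV. p s a s' * v s')"
    by (rule sum_p_mult_ge) (metis assms abs_le_D2 minus_le_iff)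
  ultimately show ?thesis by (intro abs_leI) linarith+
qed

lemma ex_pos_p: "\<exists>s'. 0 < p s a s'"
proof (rule ccontr)
  assume "\<not> ?thesis"
  then have "(\<Sum>s'\<in>UNIV. p s a s') \<le> 0" by (intro sum_nonpos) (simp add: not_less)
  then show False using sum_p_eq_1 by simp
qed

definition policy_edges :: "('s \<Rightarrow> 'a) \<Rightarrow> ('s \<times> 's) set" where
  "policy_edges \<pi> = {(x, y). 0 < p x (\<pi> x) y}"

lemma policy_edges_trancl: "(x, y) \<in> (policy_edges \<pi>)\<^sup>+"
  using ergodic unfolding ergodic_mdp_def policy_edges_def by blast

definition min_pos_p :: real where
  "min_pos_p = Min {p s a s' | s a s'. 0 < p s a s'}"

lemma min_pos_p_pos: "0 < min_pos_p" and min_pos_p_le: "0 < p s a s' \<Longrightarrow> min_pos_p \<le> p s a s'"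
proof -
  let ?A = "{p s a s' | s a s'. 0 < p s a s'}"
  have "?A \<subseteq> (\<lambda>(s, a, s'). p s a s') ` UNIV"
  proof
    fix x assume "x \<in> ?A"
    then obtain s a s' where "x = p s a s'" by blast
    then show "x \<in> (\<lambda>(s, a, s'). p s a s') ` UNIV" by (auto intro: image_eqI[where x="(s, a, s')"])
  qed
  then have fin: "finite ?A" by (rule finite_subset) simp
  obtain t where "0 < p undefined undefined t" using ex_pos_p by blast
  then have ne: "?A \<noteq> {}" by blast
  show "0 < min_pos_p" unfolding min_pos_p_def using Min_in[OF fin ne] by auto
  show "0 < p s a s' \<Longrightarrow> min_pos_p \<le> p s a s'" unfolding min_pos_p_def by (rule Min_le[OF fin]) auto
qed

lemma min_pos_p_le_1: "min_pos_p \<le> 1"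
proof -
  obtain s' where s': "0 < p undefined undefined s'" using ex_pos_p by blast
  have "p undefined undefined s' \<le> 1"
    using member_le_sum[of s' UNIV "p undefined undefined"] p_nonneg sum_p_eq_1 by auto
  then show ?thesis using min_pos_p_le[OF s'] by linarith
qed

lemma abs_r_le_rnorm: "\<bar>r s a\<bar> \<le> rnorm r"
proof -
  have range: "{\<bar>r s a\<bar> | s a. True} = (\<lambda>(s, a). \<bar>r s a\<bar>) ` UNIV" by auto
  show ?thesis unfolding rnorm_def range by (rule Max_ge) auto
qed

lemma rnorm_nonneg: "0 \<le> rnorm r"
  using abs_r_le_rnorm[of undefined undefined] by linarith

lemma Tbell_add_const: "Tbell r p (x + c *\<^sub>R allones) = Tbell r p x + c *\<^sub>R allones"
  by (simp add: vec_eq_iff Tbell_nth state_max_add_const distrib_left sum.distrib sum_p_mult_const)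
     (simp add: allones_def)

lemma avg_optimality_eq_add_const:
  "avg_optimality_eq r p q \<rho> \<Longrightarrow> avg_optimality_eq r p (q + c *\<^sub>R allones) \<rho>"
  unfolding avg_optimality_eq_def state_max_add_const
  by (simp add: allones_def distrib_left sum.distrib sum_p_mult_const)

definition disc_bellman :: "real \<Rightarrow> real^'s \<Rightarrow> real^'s" where
  "disc_bellman \<beta> V = (\<chi> s. MAX a. r s a + \<beta> * (\<Sum>s'\<in>UNIV. p s a s' * V$s'))"

lemma disc_bellman_has_fixpoint:
  assumes b: "0 \<le> \<beta>" "\<beta> < 1"
  shows "\<exists>V. disc_bellman \<beta> V = V \<and> (\<forall>s. \<bar>V$s\<bar> \<le> rnorm r / (1 - \<beta>))"
proof -
  define c where "c = rnorm r / (1 - \<beta>)"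
  have c0: "0 \<le> c" unfolding c_def using b rnorm_nonneg by auto
  have c_eq: "rnorm r + \<beta> * c = c" unfolding c_def using b by (simp add: field_simps)
  let ?S = "cbox (\<chi> s. - c) (\<chi> s. c) :: (real^'s) set"
  have mem_S: "V \<in> ?S \<longleftrightarrow> (\<forall>s. \<bar>V$s\<bar> \<le> c)" for V
    unfolding mem_box_cart abs_le_iff by (simp add: minus_le_iff conj_commute)
  have cont: "continuous_on ?S (disc_bellman \<beta>)" unfolding disc_bellman_def
    by (intro continuous_on_vec_lambda continuous_on_Max_UNIV continuous_intros)
  have "disc_bellman \<beta> V \<in> ?S" if "V \<in> ?S" for V
  proof -
    have "\<bar>r s a + \<beta> * (\<Sum>s'\<in>UNIV. p s a s' * V$s')\<bar> \<le> c" for s a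
    proof -
      have "\<bar>\<Sum>s'\<in>UNIV. p s a s' * V$s'\<bar> \<le> c"
        using that by (intro abs_sum_p_mult_le) (simp add: mem_S)
      then have "\<bar>\<beta> * (\<Sum>s'\<in>UNIV. p s a s' * V$s')\<bar> \<le> \<beta> * c"
        using b by (simp add: abs_mult mult_left_mono)
      then show ?thesis
        using abs_r_le_rnorm[of s a] c_eq
          abs_triangle_ineq[of "r s a" "\<beta> * (\<Sum>s'\<in>UNIV. p s a s' * V$s')"]
        by linarith
    qed
    then show ?thesis unfolding mem_S disc_bellman_def by (simp add: abs_Max_UNIV_le)
  qed
  moreover have "?S \<noteq> {}" using mem_S[of 0] c0 by auto
  ultimately obtain V where "V \<in> ?S" "disc_bellman \<beta> V = V"
    using brouwer[OF compact_cbox convex_box(1) _ cont] by blast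
  then show ?thesis using mem_S c_def by auto
qed

text \<open>Since \<open>\<beta> \<ge> 1/2\<close>, the transition from \<open>z\<close> to \<open>x\<close> enters the equation for \<open>V z\<close> with
  weight at least \<open>min_pos_p / 2\<close>.\<close>

lemma disc_fixpoint_successor_bound:
  assumes b: "1/2 \<le> \<beta>" "\<beta> < 1" and bd: "\<bar>V$m\<bar> \<le> rnorm r / (1 - \<beta>)"
    and m: "\<And>s. V$m \<le> V$s"
    and z: "V$z = r z a + \<beta> * (\<Sum>s'\<in>UNIV. p z a s' * V$s')"
    and px: "0 < p z a x"
  shows "V$x - V$m \<le> 2 * (V$z - V$m + 2 * rnorm r) / min_pos_p"
proof -
  define w where "w s = V$s - V$m" for s
  have w0: "0 \<le> w s" for s using m w_def by auto
  have "\<bar>(1 - \<beta>) * V$m\<bar> \<le> rnorm r"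
    using bd b by (intro abs_mult_le_if_le_divide) auto
  moreover have "V$z - V$m = r z a - (1 - \<beta>) * V$m + \<beta> * (\<Sum>s'\<in>UNIV. p z a s' * w s')"
    using z unfolding w_def sum_p_mult_diff_const by (simp add: algebra_simps)
  moreover have "\<beta> * (p z a x * w x) \<le> \<beta> * (\<Sum>s'\<in>UNIV. p z a s' * w s')"
    using b by (intro mult_left_mono member_le_sum) (auto simp: p_nonneg w0)
  ultimately have upper: "\<beta> * p z a x * w x \<le> V$z - V$m + 2 * rnorm r"
    using abs_r_le_rnorm[of z a] by (simp add: abs_le_iff)
  have "min_pos_p / 2 \<le> 1/2 * p z a x" using min_pos_p_le[OF px] by simp
  also have "\<dots> \<le> \<beta> * p z a x" using b p_nonneg by (intro mult_right_mono) auto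
  finally have "min_pos_p / 2 \<le> \<beta> * p z a x" .
  then have "min_pos_p / 2 * w x \<le> \<beta> * p z a x * w x" using w0[of x] by (rule mult_right_mono)
  with upper min_pos_p_pos show ?thesis unfolding w_def by (simp add: field_simps)
qed

lemma disc_fixpoint_oscillation_le:
  assumes b: "1/2 \<le> \<beta>" "\<beta> < 1" and fixp: "disc_bellman \<beta> V = V"
    and bd: "\<forall>s. \<bar>V$s\<bar> \<le> rnorm r / (1 - \<beta>)"
  shows "V$x - V$y \<le> reach_bound (rnorm r) min_pos_p CARD('s \<times> 's)"
proof -
  obtain m where m: "\<And>s. V$m \<le> V$s" using ex_Min_UNIV[of "\<lambda>s. V$s"] by blast
  obtain \<pi> where \<pi>: "\<And>s. (MAX a. r s a + \<beta> * (\<Sum>s'\<in>UNIV. p s a s' * V$s'))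
      = r s (\<pi> s) + \<beta> * (\<Sum>s'\<in>UNIV. p s (\<pi> s) s' * V$s')"
    using ex_Max_selector[of "\<lambda>s a. r s a + \<beta> * (\<Sum>s'\<in>UNIV. p s a s' * V$s')"] by blast
  have V: "V$s = r s (\<pi> s) + \<beta> * (\<Sum>s'\<in>UNIV. p s (\<pi> s) s' * V$s')" for s
    using arg_cong[OF fixp, of "\<lambda>V. V$s"] \<pi>[of s] unfolding disc_bellman_def by simp
  have pm: "0 < min_pos_p" "min_pos_p \<le> 1" using min_pos_p_pos min_pos_p_le_1 by auto
  have walk: "V$x - V$m \<le> reach_bound (rnorm r) min_pos_p n" if "(m, x) \<in> policy_edges \<pi> ^^ n"
    for n x
    using that
  proof (induction n arbitrary: x)
    case (Suc n)
    then obtain z where z: "(m, z) \<in> policy_edges \<pi> ^^ n" "0 < p z (\<pi> z) x"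
      unfolding policy_edges_def by auto
    have "V$x - V$m \<le> 2 * (V$z - V$m + 2 * rnorm r) / min_pos_p"
      by (rule disc_fixpoint_successor_bound[OF b _ m V z(2)]) (use bd in blast)
    also have "\<dots> \<le> reach_bound (rnorm r) min_pos_p (Suc n)"
      using Suc.IH[OF z(1)] pm by (simp add: divide_right_mono)
    finally show ?case .
  qed simp
  obtain n where n: "n \<le> card (policy_edges \<pi>)" "(m, x) \<in> policy_edges \<pi> ^^ n"
    using trancl_finite_eq_relpow[of "policy_edges \<pi>"] policy_edges_trancl[of m x \<pi>] by auto
  have "card (policy_edges \<pi>) \<le> CARD('s \<times> 's)" by (rule card_mono) auto
  then have "reach_bound (rnorm r) min_pos_p n \<le> reach_bound (rnorm r) min_pos_p CARD('s \<times> 's)"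
    using reach_bound_mono[OF rnorm_nonneg pm] n(1) by simp
  then show ?thesis using walk[OF n(2)] m[of y] by simp
qed

lemma relative_disc_fixpoint:
  assumes b: "1/2 \<le> \<beta>" "\<beta> < 1"
  shows "\<exists>h \<rho>. (\<forall>s. \<bar>h$s\<bar> \<le> reach_bound (rnorm r) min_pos_p CARD('s \<times> 's)) \<and> \<bar>\<rho>\<bar> \<le> rnorm r
    \<and> (\<forall>s. h$s + \<rho> = (MAX a. r s a + \<beta> * (\<Sum>s'\<in>UNIV. p s a s' * h$s')))"
proof -
  obtain V where fixp: "disc_bellman \<beta> V = V" and bd: "\<forall>s. \<bar>V$s\<bar> \<le> rnorm r / (1 - \<beta>)"
    using disc_bellman_has_fixpoint[of \<beta>] b by auto
  define s0 :: 's where "s0 = undefined"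
  define h where "h = (\<chi> s. V$s - V$s0)"
  define \<rho> where "\<rho> = (1 - \<beta>) * V$s0"
  have "\<bar>h$s\<bar> \<le> reach_bound (rnorm r) min_pos_p CARD('s \<times> 's)" for s
    using disc_fixpoint_oscillation_le[OF b fixp bd, of s s0]
      disc_fixpoint_oscillation_le[OF b fixp bd, of s0 s]
    unfolding h_def by auto
  moreover have "\<bar>\<rho>\<bar> \<le> rnorm r" unfolding \<rho>_def using bd b by (intro abs_mult_le_if_le_divide) auto
  moreover have "h$s + \<rho> = (MAX a. r s a + \<beta> * (\<Sum>s'\<in>UNIV. p s a s' * h$s'))" for s
  proof -
    have sum_h: "(\<Sum>s'\<in>UNIV. p s a s' * h$s') = (\<Sum>s'\<in>UNIV. p s a s' * V$s') - V$s0" for a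
      unfolding h_def using sum_p_mult_diff_const by simp
    have "(MAX a. r s a + \<beta> * (\<Sum>s'\<in>UNIV. p s a s' * h$s'))
        = (MAX a. r s a + \<beta> * (\<Sum>s'\<in>UNIV. p s a s' * V$s') + (- \<beta> * V$s0))"
      by (simp only: sum_h) (simp add: algebra_simps)
    also have "\<dots> = V$s - \<beta> * V$s0"
      using arg_cong[OF fixp, of "\<lambda>V. V$s"] unfolding Max_UNIV_add_const disc_bellman_def by simp
    finally show ?thesis unfolding h_def \<rho>_def by (simp add: algebra_simps)
  qed
  ultimately show ?thesis by blast
qed

lemma avg_optimality_eq_of_state_eq:
  assumes "\<And>s. h$s + \<rho> = (MAX a. r s a + (\<Sum>s'\<in>UNIV. p s a s' * h$s'))"
  shows "avg_optimality_eq r p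
    (\<chi> i. r (fst i) (snd i) - \<rho> + (\<Sum>s'\<in>UNIV. p (fst i) (snd i) s' * h$s')) \<rho>"
proof -
  have "state_max (\<chi> i. r (fst i) (snd i) - \<rho> + (\<Sum>s'\<in>UNIV. p (fst i) (snd i) s' * h$s')) s
      = (MAX a. (r s a + (\<Sum>s'\<in>UNIV. p s a s' * h$s')) + (- \<rho>))" for s
    unfolding state_max_def by (simp add: algebra_simps)
  then have "state_max (\<chi> i. r (fst i) (snd i) - \<rho> + (\<Sum>s'\<in>UNIV. p (fst i) (snd i) s' * h$s')) s
      = h$s" for s
    using assms[of s] unfolding Max_UNIV_add_const by simp
  then show ?thesis unfolding avg_optimality_eq_def by simp
qed

lemma ex_relative_disc_fixpoint_seq:
  "\<exists>h \<rho>. \<forall>n. (\<forall>s. \<bar>h n $ s\<bar> \<le> reach_bound (rnorm r) min_pos_p CARD('s \<times> 's)) \<and> \<bar>\<rho> n\<bar> \<le> rnorm r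
    \<and> (\<forall>s. h n $ s + \<rho> n = (MAX a. r s a + vanishing_discount n * (\<Sum>s'\<in>UNIV. p s a s' * h n $ s')))"
proof -
  have "1/2 \<le> vanishing_discount n" "vanishing_discount n < 1" for n
    unfolding vanishing_discount_def by (auto simp: field_simps)
  then have "\<forall>n. \<exists>h \<rho>. (\<forall>s. \<bar>h$s\<bar> \<le> reach_bound (rnorm r) min_pos_p CARD('s \<times> 's)) \<and> \<bar>\<rho>\<bar> \<le> rnorm r
      \<and> (\<forall>s. h$s + \<rho> = (MAX a. r s a + vanishing_discount n * (\<Sum>s'\<in>UNIV. p s a s' * h$s')))"
    using relative_disc_fixpoint by presburger
  from choice[OF this] obtain h where
    "\<forall>n. \<exists>\<rho>. (\<forall>s. \<bar>h n $ s\<bar> \<le> reach_bound (rnorm r) min_pos_p CARD('s \<times> 's)) \<and> \<bar>\<rho>\<bar> \<le> rnorm r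
      \<and> (\<forall>s. h n $ s + \<rho> = (MAX a. r s a + vanishing_discount n * (\<Sum>s'\<in>UNIV. p s a s' * h n $ s')))"
    by blast
  from choice[OF this] show ?thesis by blast
qed

text \<open>Vanishing discount: the relative values of the discounted problems are uniformly bounded
  by ergodicity, and a convergent subsequence solves the average-reward equation.\<close>

lemma ex_avg_optimality_solution: "\<exists>q \<rho>. avg_optimality_eq r p q \<rho>"
proof -
  define B where "B = reach_bound (rnorm r) min_pos_p CARD('s \<times> 's)"
  define \<beta> where "\<beta> = vanishing_discount"
  obtain h \<rho> where hb: "\<And>n s. \<bar>h n $ s\<bar> \<le> B" and \<rho>b: "\<And>n. \<bar>\<rho> n\<bar> \<le> rnorm r"
    and eqn: "\<And>n s. h n $ s + \<rho> n = (MAX a. r s a + \<beta> n * (\<Sum>s'\<in>UNIV. p s a s' * h n $ s'))"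
    using ex_relative_disc_fixpoint_seq unfolding B_def \<beta>_def by blast
  have "norm (h n) \<le> CARD('s) * B" for n
    using norm_le_l1_cart[of "h n"] sum_mono[of UNIV "\<lambda>i. \<bar>h n $ i\<bar>" "\<lambda>_. B"] hb by simp
  then have "bounded (range h)" unfolding bounded_iff by blast
  moreover have "bounded (range \<rho>)" unfolding bounded_iff using \<rho>b by auto
  ultimately have "bounded (range (\<lambda>n. (h n, \<rho> n)))"
    by (rule bounded_subset[OF bounded_Times]) auto
  then obtain l \<sigma> where \<sigma>: "strict_mono \<sigma>" "((\<lambda>n. (h n, \<rho> n)) \<circ> \<sigma>) \<longlonglongrightarrow> l"
    using bounded_imp_convergent_subsequence by blast
  have hlim: "(\<lambda>n. h (\<sigma> n)) \<longlonglongrightarrow> fst l" using tendsto_fst[OF \<sigma>(2)] by (simp add: o_def)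
  have \<rho>lim: "(\<lambda>n. \<rho> (\<sigma> n)) \<longlonglongrightarrow> snd l" using tendsto_snd[OF \<sigma>(2)] by (simp add: o_def)
  have "\<beta> \<longlonglongrightarrow> 1" unfolding \<beta>_def vanishing_discount_def by real_asymp
  then have \<beta>lim: "(\<lambda>n. \<beta> (\<sigma> n)) \<longlonglongrightarrow> 1" using LIMSEQ_subseq_LIMSEQ[OF _ \<sigma>(1)] by (simp add: o_def)
  have "fst l $ s + snd l = (MAX a. r s a + (\<Sum>s'\<in>UNIV. p s a s' * fst l $ s'))" for s
  proof -
    have "(\<lambda>n. h (\<sigma> n) $ s + \<rho> (\<sigma> n)) \<longlonglongrightarrow> fst l $ s + snd l"
      by (intro tendsto_intros hlim \<rho>lim)
    moreover have "(\<lambda>n. MAX a. r s a + \<beta> (\<sigma> n) * (\<Sum>s'\<in>UNIV. p s a s' * h (\<sigma> n) $ s'))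
        \<longlonglongrightarrow> (MAX a. r s a + 1 * (\<Sum>s'\<in>UNIV. p s a s' * fst l $ s'))"
      by (intro tendsto_Max_UNIV tendsto_intros hlim \<beta>lim)
    ultimately show ?thesis using LIMSEQ_unique unfolding eqn by fastforce
  qed
  then show ?thesis using avg_optimality_eq_of_state_eq by blast
qed

text \<open>The maximum of \<open>\<delta>\<close> propagates along every transition of \<open>\<pi>\<close>, hence everywhere by
  irreducibility.\<close>

lemma subharmonic_const:
  assumes sub: "\<And>s. \<delta> s \<le> (\<Sum>s'\<in>UNIV. p s (\<pi> s) s' * \<delta> s')"
  shows "\<delta> x = \<delta> y"
proof -
  obtain m where m: "\<And>s. \<delta> s \<le> \<delta> m" using ex_Max_UNIV[of \<delta>] by blast
  have step: "\<delta> x' = \<delta> m \<Longrightarrow> (x', y') \<in> policy_edges \<pi> \<Longrightarrow> \<delta> y' = \<delta> m" for x' y'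
  proof (rule ccontr)
    assume a: "\<delta> x' = \<delta> m" "(x', y') \<in> policy_edges \<pi>" "\<delta> y' \<noteq> \<delta> m"
    have "(\<Sum>s'\<in>UNIV. p x' (\<pi> x') s' * \<delta> s') < (\<Sum>s'\<in>UNIV. p x' (\<pi> x') s' * \<delta> m)"
    proof (rule sum_strict_mono_ex1)
      show "\<exists>s'\<in>UNIV. p x' (\<pi> x') s' * \<delta> s' < p x' (\<pi> x') s' * \<delta> m"
        using a(2,3) m[of y'] unfolding policy_edges_def by (intro bexI[of _ y']) auto
    qed (auto simp: m p_nonneg mult_left_mono)
    then show False using sub[of x'] a(1) sum_p_mult_const by simp
  qed
  have "\<delta> s = \<delta> m" for s
    using policy_edges_trancl[of m s \<pi>] by (induction rule: trancl_induct) (auto intro: step)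
  then show ?thesis by (metis (no_types))
qed

lemma avg_optimality_eq_unique_up_to_const:
  assumes q1: "avg_optimality_eq r p q1 \<rho>" and q2: "avg_optimality_eq r p q2 \<rho>"
  shows "\<exists>c. q1 = q2 + c *\<^sub>R allones"
proof -
  define \<delta> where "\<delta> s = state_max q1 s - state_max q2 s" for s
  have diff: "q1 $ (s, a) - q2 $ (s, a) = (\<Sum>s'\<in>UNIV. p s a s' * \<delta> s')" for s a
    using q1 q2 unfolding avg_optimality_eq_def \<delta>_def
    by (simp add: right_diff_distrib sum_subtractf)
  obtain \<pi> where \<pi>: "\<And>s. state_max q1 s = q1 $ (s, \<pi> s)"
    using ex_Max_selector[of "\<lambda>s a. q1 $ (s, a)"] unfolding state_max_def by blast
  have "\<delta> s \<le> (\<Sum>s'\<in>UNIV. p s (\<pi> s) s' * \<delta> s')" for s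
    using diff[of s "\<pi> s"] \<pi>[of s] state_max_ge[of q2 s "\<pi> s"] unfolding \<delta>_def by linarith
  then have "\<delta> s = \<delta> undefined" for s by (rule subharmonic_const)
  moreover define c where "c = \<delta> undefined"
  ultimately have const: "\<delta> = (\<lambda>_. c)" by blast
  have "q1 $ (s, a) - q2 $ (s, a) = c" for s a
    using diff[of s a] unfolding const by (simp add: sum_p_mult_const)
  then have "q1 = q2 + c *\<^sub>R allones" by (auto simp: vec_eq_iff allones_def algebra_simps)
  then show ?thesis by blast
qed

lemma ex_normalized_avg_optimality_solution:
  assumes u: "0 < u" and shift: "\<And>x c. f (x + c *\<^sub>R allones) = f x + c * u"
  shows "\<exists>q \<rho>. avg_optimality_eq r p q \<rho> \<and> f q = \<rho>"
proof -
  obtain q \<rho> where q: "avg_optimality_eq r p q \<rho>" using ex_avg_optimality_solution by blast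
  define c where "c = (\<rho> - f q) / u"
  have "f (q + c *\<^sub>R allones) = \<rho>" unfolding shift c_def using u by simp
  then show ?thesis using avg_optimality_eq_add_const[OF q] by blast
qed

lemma normalized_avg_optimality_solution_unique:
  assumes u: "0 < u" and shift: "\<And>x c. f (x + c *\<^sub>R allones) = f x + c * u"
    and q1: "avg_optimality_eq r p q1 \<rho>" "f q1 = \<rho>" and q2: "avg_optimality_eq r p q2 \<rho>" "f q2 = \<rho>"
  shows "q1 = q2"
proof -
  obtain c where c: "q1 = q2 + c *\<^sub>R allones"
    using avg_optimality_eq_unique_up_to_const[OF q1(1) q2(1)] by blast
  then have "c * u = 0" using q1(2) q2(2) shift[of q2 c] by simp
  then show ?thesis using c u by simp
qed

end

section \<open>Optimal average reward\<close>

lemma sum_telescope_le: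
  fixes a H :: "nat \<Rightarrow> real"
  assumes "\<And>t. a t \<le> c + (H t - H (Suc t))"
  shows "(\<Sum>t\<le>T. a t) \<le> real (Suc T) * c + (H 0 - H (Suc T))"
proof -
  have "(\<Sum>t\<le>T. a t) \<le> (\<Sum>t\<le>T. c + (H t - H (Suc t)))" by (rule sum_mono) (rule assms)
  also have "\<dots> = real (Suc T) * c + (H 0 - H (Suc T))" by (simp add: sum.distrib sum_telescope)
  finally show ?thesis .
qed

lemma sum_swap3:
  "(\<Sum>x\<in>A. \<Sum>y\<in>B. \<Sum>z\<in>C. f x y z) = (\<Sum>z\<in>C. \<Sum>x\<in>A. \<Sum>y\<in>B. f x y z)"
proof -
  have "(\<Sum>x\<in>A. \<Sum>y\<in>B. \<Sum>z\<in>C. f x y z) = (\<Sum>x\<in>A. \<Sum>z\<in>C. \<Sum>y\<in>B. f x y z)"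
    by (rule sum.cong[OF refl], rule sum.swap)
  also have "\<dots> = (\<Sum>z\<in>C. \<Sum>x\<in>A. \<Sum>y\<in>B. f x y z)" by (rule sum.swap)
  finally show ?thesis .
qed

context ergodic_mdp_model
begin

lemma state_dist_nonneg: "markov_policy \<pi> \<Longrightarrow> 0 \<le> state_dist p \<pi> s0 t s"
  by (induction t arbitrary: s)
    (auto simp: markov_policy_def intro!: sum_nonneg mult_nonneg_nonneg p_nonneg)

lemma state_dist_sum_eq_1:
  assumes \<pi>: "markov_policy \<pi>"
  shows "(\<Sum>s\<in>UNIV. state_dist p \<pi> s0 t s) = 1"
proof (induction t)
  case (Suc t)
  let ?d = "state_dist p \<pi> s0 t"
  have "(\<Sum>s'\<in>UNIV. state_dist p \<pi> s0 (Suc t) s')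
      = (\<Sum>s'\<in>UNIV. \<Sum>s\<in>UNIV. \<Sum>a\<in>UNIV. ?d s * \<pi> t s a * p s a s')" by simp
  also have "\<dots> = (\<Sum>s\<in>UNIV. \<Sum>a\<in>UNIV. \<Sum>s'\<in>UNIV. ?d s * \<pi> t s a * p s a s')"
    by (rule sum_swap3[symmetric])
  also have "\<dots> = (\<Sum>s\<in>UNIV. \<Sum>a\<in>UNIV. ?d s * \<pi> t s a * (\<Sum>s'\<in>UNIV. p s a s'))"
    by (simp add: sum_distrib_left)
  also have "\<dots> = (\<Sum>s\<in>UNIV. ?d s)"
    using \<pi> by (simp add: sum_p_eq_1 sum_distrib_left[symmetric] markov_policy_def)
  finally show ?case using Suc by simp
qed simp

lemma state_dist_le_1: "markov_policy \<pi> \<Longrightarrow> state_dist p \<pi> s0 t s \<le> 1"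
  using member_le_sum[of s UNIV "state_dist p \<pi> s0 t"] state_dist_nonneg state_dist_sum_eq_1 by auto

end

locale avg_opt_solution = ergodic_mdp_model r p
  for r :: "'s::finite \<Rightarrow> 'a::finite \<Rightarrow> real" and p :: "'s \<Rightarrow> 'a \<Rightarrow> 's \<Rightarrow> real" +
  fixes q :: "real^('s \<times> 'a)" and \<rho> :: real
  assumes avg_eq: "avg_optimality_eq r p q \<rho>"
begin

lemma q_eq: "q $ (s, a) = r s a - \<rho> + (\<Sum>s'\<in>UNIV. p s a s' * state_max q s')"
  using avg_eq unfolding avg_optimality_eq_def by blast

lemma abs_gain_le_rnorm: "\<bar>\<rho>\<bar> \<le> rnorm r"
proof -
  obtain smax where smax: "\<And>s. state_max q s \<le> state_max q smax" using ex_Max_UNIV by blast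
  obtain smin where smin: "\<And>s. state_max q smin \<le> state_max q s" using ex_Min_UNIV by blast
  obtain a where a: "state_max q smax = q $ (smax, a)"
    using Max_UNIV_attained unfolding state_max_def by blast
  have "\<rho> \<le> r smax a"
    using q_eq[of smax a] a sum_p_mult_le[of "state_max q" "state_max q smax" smax a, OF smax]
    by linarith
  moreover have "r smin undefined \<le> \<rho>"
    using q_eq[of smin undefined] state_max_ge[of q smin undefined]
      sum_p_mult_ge[of "state_max q smin" "state_max q" smin undefined, OF smin]
    by linarith
  ultimately show ?thesis
    using abs_r_le_rnorm[of smax a] abs_r_le_rnorm[of smin undefined] by linarith
qed

definition exp_value :: "(nat \<Rightarrow> 's \<Rightarrow> 'a \<Rightarrow> real) \<Rightarrow> 's \<Rightarrow> nat \<Rightarrow> real" where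
  "exp_value \<pi> s0 t = (\<Sum>s\<in>UNIV. state_dist p \<pi> s0 t s * state_max q s)"

lemma abs_exp_value_le:
  assumes \<pi>: "markov_policy \<pi>"
  shows "\<bar>exp_value \<pi> s0 t\<bar> \<le> (\<Sum>s\<in>UNIV. \<bar>state_max q s\<bar>)"
proof -
  have "\<bar>exp_value \<pi> s0 t\<bar> \<le> (\<Sum>s\<in>UNIV. \<bar>state_dist p \<pi> s0 t s * state_max q s\<bar>)"
    unfolding exp_value_def by (rule sum_abs)
  also have "\<dots> \<le> (\<Sum>s\<in>UNIV. \<bar>state_max q s\<bar>)"
    by (intro sum_mono)
      (simp add: abs_mult state_dist_nonneg[OF \<pi>] state_dist_le_1[OF \<pi>] mult_left_le_one_le)
  finally show ?thesis .
qed

text \<open>Substituting the optimality equation for \<open>r\<close> makes the expected reward telescope.\<close>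

lemma exp_reward_eq:
  assumes \<pi>: "markov_policy \<pi>"
  shows "exp_reward r p \<pi> s0 t
    = (\<Sum>s\<in>UNIV. \<Sum>a\<in>UNIV. state_dist p \<pi> s0 t s * \<pi> t s a * q $ (s, a)) + \<rho> - exp_value \<pi> s0 (Suc t)"
proof -
  let ?d = "state_dist p \<pi> s0 t"
  define P where "P s a = (\<Sum>s'\<in>UNIV. p s a s' * state_max q s')" for s a
  have "(\<Sum>s\<in>UNIV. \<Sum>a\<in>UNIV. ?d s * \<pi> t s a * \<rho>) = \<rho>"
    using \<pi> state_dist_sum_eq_1[OF \<pi>]
    by (simp add: sum_distrib_right[symmetric] sum_distrib_left[symmetric] markov_policy_def
        mult.assoc)
  moreover have "(\<Sum>s\<in>UNIV. \<Sum>a\<in>UNIV. ?d s * \<pi> t s a * P s a) = exp_value \<pi> s0 (Suc t)"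
  proof -
    have "(\<Sum>s\<in>UNIV. \<Sum>a\<in>UNIV. ?d s * \<pi> t s a * P s a)
        = (\<Sum>s\<in>UNIV. \<Sum>a\<in>UNIV. \<Sum>s'\<in>UNIV. ?d s * \<pi> t s a * p s a s' * state_max q s')"
      unfolding P_def by (simp add: sum_distrib_left mult.assoc)
    also have "\<dots> = (\<Sum>s'\<in>UNIV. \<Sum>s\<in>UNIV. \<Sum>a\<in>UNIV. ?d s * \<pi> t s a * p s a s' * state_max q s')"
      by (rule sum_swap3)
    also have "\<dots> = exp_value \<pi> s0 (Suc t)" unfolding exp_value_def by (simp add: sum_distrib_right)
    finally show ?thesis .
  qed
  moreover have "exp_reward r p \<pi> s0 t = (\<Sum>s\<in>UNIV. \<Sum>a\<in>UNIV. ?d s * \<pi> t s a * q $ (s, a))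
      + (\<Sum>s\<in>UNIV. \<Sum>a\<in>UNIV. ?d s * \<pi> t s a * \<rho>) - (\<Sum>s\<in>UNIV. \<Sum>a\<in>UNIV. ?d s * \<pi> t s a * P s a)"
    unfolding exp_reward_def q_eq P_def[symmetric]
    by (simp add: algebra_simps sum.distrib sum_subtractf)
  ultimately show ?thesis by simp
qed

lemma exp_reward_le:
  assumes \<pi>: "markov_policy \<pi>"
  shows "exp_reward r p \<pi> s0 t \<le> \<rho> + (exp_value \<pi> s0 t - exp_value \<pi> s0 (Suc t))"
proof -
  have "(\<Sum>s\<in>UNIV. \<Sum>a\<in>UNIV. state_dist p \<pi> s0 t s * \<pi> t s a * q $ (s, a))
      \<le> (\<Sum>s\<in>UNIV. \<Sum>a\<in>UNIV. state_dist p \<pi> s0 t s * \<pi> t s a * state_max q s)"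
    using \<pi> by (intro sum_mono mult_left_mono state_max_ge)
      (auto simp: markov_policy_def state_dist_nonneg)
  also have "\<dots> = exp_value \<pi> s0 t"
    using \<pi> unfolding exp_value_def
    by (simp add: sum_distrib_right[symmetric] sum_distrib_left[symmetric] markov_policy_def
        mult.assoc)
  finally show ?thesis using exp_reward_eq[OF \<pi>, of s0 t] by linarith
qed

lemma ex_greedy_policy:
  "\<exists>\<pi>. markov_policy \<pi> \<and>
     (\<forall>s0 t. exp_reward r p \<pi> s0 t = \<rho> + (exp_value \<pi> s0 t - exp_value \<pi> s0 (Suc t)))"
proof -
  obtain g where g: "\<And>s. state_max q s = q $ (s, g s)"
    using ex_Max_selector[of "\<lambda>s a. q $ (s, a)"] unfolding state_max_def by blast
  define \<pi> where "\<pi> (t::nat) s a = (if a = g s then 1 else 0 :: real)" for t s a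
  have \<pi>: "markov_policy \<pi>" unfolding markov_policy_def \<pi>_def by auto
  have "(\<Sum>a\<in>UNIV. c * \<pi> t s a * q $ (s, a)) = c * state_max q s" for c t s
  proof -
    have "(\<Sum>a\<in>UNIV. c * \<pi> t s a * q $ (s, a)) = (\<Sum>a\<in>UNIV. if a = g s then c * q $ (s, a) else 0)"
      unfolding \<pi>_def by (rule sum.cong) auto
    then show ?thesis unfolding g by simp
  qed
  then have "(\<Sum>s\<in>UNIV. \<Sum>a\<in>UNIV. state_dist p \<pi> s0 t s * \<pi> t s a * q $ (s, a)) = exp_value \<pi> s0 t"
    for s0 t unfolding exp_value_def by simp
  then show ?thesis using \<pi> exp_reward_eq[OF \<pi>] by auto
qed

lemma avg_reward_tendsto_le_gain:
  assumes \<pi>: "markov_policy \<pi>" and lim: "avg_reward r p \<pi> s0 \<longlonglongrightarrow> L"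
  shows "L \<le> \<rho>"
proof -
  define K where "K = (\<Sum>s\<in>UNIV. \<bar>state_max q s\<bar>)"
  have "(\<Sum>t\<le>T. exp_reward r p \<pi> s0 t) \<le> real (Suc T) * \<rho> + 2 * K" for T
    using sum_telescope_le[where H="exp_value \<pi> s0" and T=T, OF exp_reward_le[OF \<pi>]]
      abs_exp_value_le[OF \<pi>, of s0 0] abs_exp_value_le[OF \<pi>, of s0 "Suc T"]
    unfolding K_def by linarith
  then have "\<forall>T\<ge>1. avg_reward r p \<pi> s0 T \<le> (real (Suc T) * \<rho> + 2 * K) / real T"
    unfolding avg_reward_def by (auto intro: divide_right_mono)
  moreover have "(\<lambda>T. (real (Suc T) * \<rho> + 2 * K) / real T) \<longlonglongrightarrow> \<rho>" by real_asymp
  ultimately show ?thesis using LIMSEQ_le[OF lim] by blast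
qed

lemma ex_policy_avg_reward_tendsto_gain:
  "\<exists>\<pi>. markov_policy \<pi> \<and> avg_reward r p \<pi> s0 \<longlonglongrightarrow> \<rho>"
proof -
  obtain \<pi> where \<pi>: "markov_policy \<pi>"
    and eq: "\<And>t. exp_reward r p \<pi> s0 t = \<rho> + (exp_value \<pi> s0 t - exp_value \<pi> s0 (Suc t))"
    using ex_greedy_policy by blast
  define K where "K = (\<Sum>s\<in>UNIV. \<bar>state_max q s\<bar>)"
  have sum_eq: "(\<Sum>t\<le>T. exp_reward r p \<pi> s0 t)
      = real (Suc T) * \<rho> + (exp_value \<pi> s0 0 - exp_value \<pi> s0 (Suc T))"
    for T unfolding eq by (simp add: sum.distrib sum_telescope)
  have bd: "real (Suc T) * \<rho> - 2 * K \<le> (\<Sum>t\<le>T. exp_reward r p \<pi> s0 t)"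
    "(\<Sum>t\<le>T. exp_reward r p \<pi> s0 t) \<le> real (Suc T) * \<rho> + 2 * K" for T
    using abs_exp_value_le[OF \<pi>, of s0 0] abs_exp_value_le[OF \<pi>, of s0 "Suc T"]
    unfolding K_def sum_eq
    by linarith+
  have "avg_reward r p \<pi> s0 \<longlonglongrightarrow> \<rho>"
  proof (rule tendsto_sandwich)
    show "(\<lambda>T. (real (Suc T) * \<rho> - 2 * K) / real T) \<longlonglongrightarrow> \<rho>" by real_asymp
    show "(\<lambda>T. (real (Suc T) * \<rho> + 2 * K) / real T) \<longlonglongrightarrow> \<rho>" by real_asymp
    show "\<forall>\<^sub>F T in sequentially. (real (Suc T) * \<rho> - 2 * K) / real T \<le> avg_reward r p \<pi> s0 T"
      unfolding eventually_sequentially avg_reward_def using bd by (auto intro!: divide_right_mono)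
    show "\<forall>\<^sub>F T in sequentially. avg_reward r p \<pi> s0 T \<le> (real (Suc T) * \<rho> + 2 * K) / real T"
      unfolding eventually_sequentially avg_reward_def using bd by (auto intro!: divide_right_mono)
  qed
  then show ?thesis using \<pi> by blast
qed

lemma opt_avg_reward_eq_gain: "opt_avg_reward r p s0 = \<rho>"
  unfolding opt_avg_reward_def
  by (rule cSup_eq_maximum)
    (use ex_policy_avg_reward_tendsto_gain avg_reward_tendsto_le_gain in blast)+

section \<open>The relative flow\<close>

definition action_gap :: "'s \<Rightarrow> 'a \<Rightarrow> real" where
  "action_gap s b = state_max q s - q $ (s, b)"

text \<open>\<open>rel_max y s = state_max (q + y) s - state_max q s\<close>, so that \<open>rel_bellman y\<close> is the
  increment \<open>Tbell (q + y) - Tbell q\<close> of the Bellman operator at the solution \<open>q\<close>.\<close>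

definition rel_max :: "real^('s \<times> 'a) \<Rightarrow> 's \<Rightarrow> real" where
  "rel_max y s = (MAX b. y $ (s, b) - action_gap s b)"

definition rel_bellman :: "real^('s \<times> 'a) \<Rightarrow> real^('s \<times> 'a)" where
  "rel_bellman y = (\<chi> i. \<Sum>s'\<in>UNIV. p (fst i) (snd i) s' * rel_max y s')"

lemma action_gap_nonneg: "0 \<le> action_gap s b"
  unfolding action_gap_def using state_max_ge[of q s b] by simp

lemma rel_max_ge: "y $ (s, b) - action_gap s b \<le> rel_max y s"
  unfolding rel_max_def by (rule Max_UNIV_ge)

lemma rel_max_attained: "\<exists>b. rel_max y s = y $ (s, b) - action_gap s b"
  unfolding rel_max_def by (rule Max_UNIV_attained)

lemma rel_max_le:
  assumes "\<And>a. y $ (s, a) \<le> c"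
  shows "rel_max y s \<le> c"
proof -
  have "y $ (s, a) - action_gap s a \<le> c" for a using assms[of a] action_gap_nonneg[of s a]
    by linarith
  then show ?thesis unfolding rel_max_def Max_UNIV_le_iff by blast
qed

lemma rel_max_ge_const: "(\<And>a. c \<le> y $ (s, a)) \<Longrightarrow> c \<le> rel_max y s"
proof -
  assume c: "\<And>a. c \<le> y $ (s, a)"
  obtain b where "state_max q s = q $ (s, b)"
    using Max_UNIV_attained unfolding state_max_def by blast
  then show ?thesis using rel_max_ge[of y s b] c[of b] unfolding action_gap_def by simp
qed

lemma rel_bellman_nth: "rel_bellman y $ (s, a) = (\<Sum>s'\<in>UNIV. p s a s' * rel_max y s')"
  unfolding rel_bellman_def by simp

lemma rel_bellman_le: "(\<And>s'. rel_max y s' \<le> c) \<Longrightarrow> rel_bellman y $ i \<le> c"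
  by (cases i) (simp add: rel_bellman_nth sum_p_mult_le)

lemma rel_bellman_ge: "(\<And>s'. c \<le> rel_max y s') \<Longrightarrow> c \<le> rel_bellman y $ i"
  by (cases i) (simp add: rel_bellman_nth sum_p_mult_ge)

lemma rel_bellman_le_Max: "rel_bellman y $ i \<le> (MAX k. y $ k)"
  by (intro rel_bellman_le rel_max_le Max_UNIV_ge)

lemma Min_le_rel_bellman: "(MIN k. y $ k) \<le> rel_bellman y $ i"
  by (intro rel_bellman_ge rel_max_ge_const Min_le) auto

lemma Tbell_solution: "Tbell r p q = q + \<rho> *\<^sub>R allones"
  by (simp add: vec_eq_iff Tbell_nth q_eq allones_def)

lemma Tbell_solution_add: "Tbell r p (q + y) = q + \<rho> *\<^sub>R allones + rel_bellman y"
proof -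
  have "state_max (q + y) s' = rel_max y s' + state_max q s'" for s'
  proof -
    have "state_max (q + y) s' = (MAX b. (y $ (s', b) - action_gap s' b) + state_max q s')"
      unfolding state_max_def action_gap_def by (simp add: add.commute)
    then show ?thesis unfolding rel_max_def Max_UNIV_add_const .
  qed
  then show ?thesis
    by (simp add: vec_eq_iff Tbell_nth rel_bellman_nth q_eq allones_def distrib_left sum.distrib)
qed

text \<open>The rates of the two regimes in the contraction of the spread: while all state values lie
  \<open>\<theta>\<close> above the minimum, the minimum rises by \<open>low_gain \<theta>\<close> within time \<open>low_time \<theta>\<close>; when one
  lies \<open>\<theta>\<close> below the maximum, the maximum drops by \<open>up_gain \<theta>\<close> within time \<open>epoch\<close>, losing a
  factor \<open>inflow_factor\<close> for each of at most \<open>CARD('s)\<close> propagation steps.\<close>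

definition max_gap :: real where
  "max_gap = (MAX i. action_gap (fst i) (snd i))"

definition epoch :: nat where
  "epoch = CARD('s) + 1"

definition inflow_factor :: real where
  "inflow_factor = min_pos_p * (1 - exp (-1)) * exp (- real epoch)"

definition up_gain :: "real \<Rightarrow> real" where
  "up_gain \<theta> = \<theta> * exp (- real epoch) * inflow_factor ^ CARD('s) * (1 - exp (-1))"

definition low_time :: "real \<Rightarrow> real" where
  "low_time \<theta> = \<theta> / (2 * (\<theta> + max_gap))"

definition low_gain :: "real \<Rightarrow> real" where
  "low_gain \<theta> = \<theta> / 2 * (1 - exp (- low_time \<theta>))"

lemma action_gap_le_max_gap: "action_gap s b \<le> max_gap"
  unfolding max_gap_def using Max_UNIV_ge[of "\<lambda>i. action_gap (fst i) (snd i)" "(s, b)"] by simp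

lemma max_gap_nonneg: "0 \<le> max_gap"
  using action_gap_nonneg action_gap_le_max_gap order_trans by blast

lemma inflow_factor_pos: "0 < inflow_factor"
  unfolding inflow_factor_def using min_pos_p_pos by simp

lemma inflow_factor_le_1: "inflow_factor \<le> 1"
proof -
  have "min_pos_p * (1 - exp (-1)) \<le> 1" using min_pos_p_le_1 by (rule mult_le_one) auto
  then show ?thesis unfolding inflow_factor_def by (rule mult_le_one) auto
qed

lemma up_gain_pos: "0 < \<theta> \<Longrightarrow> 0 < up_gain \<theta>"
  unfolding up_gain_def using inflow_factor_pos by simp

lemma low_time_bounds:
  assumes "0 < \<theta>"
  shows "0 < low_time \<theta>" "low_time \<theta> \<le> 1/2" "low_time \<theta> * (max_gap + \<theta>) = \<theta> / 2"
  unfolding low_time_def using assms max_gap_nonneg by (auto simp: field_simps)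

lemma low_gain_pos: "0 < \<theta> \<Longrightarrow> 0 < low_gain \<theta>"
  unfolding low_gain_def using low_time_bounds by auto

end

context ergodic_mdp_model
begin

text \<open>\<open>forced_reach s1 k\<close> consists of the states from which every policy enters \<open>s1\<close> with
  positive probability within \<open>k\<close> steps.\<close>

primrec forced_reach :: "'s \<Rightarrow> nat \<Rightarrow> 's set" where
  "forced_reach s1 0 = {s1}"
| "forced_reach s1 (Suc k) = forced_reach s1 k \<union> {s. \<forall>a. \<exists>s'\<in>forced_reach s1 k. 0 < p s a s'}"

lemma ex_forced_entry:
  assumes "G \<noteq> {}" "G \<noteq> UNIV"
  shows "\<exists>s. s \<notin> G \<and> (\<forall>a. \<exists>s'\<in>G. 0 < p s a s')"
proof (rule ccontr)
  assume "\<not> ?thesis"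
  then have "\<forall>s. \<exists>a. s \<notin> G \<longrightarrow> (\<forall>s'\<in>G. \<not> 0 < p s a s')" by blast
  then obtain \<pi> where \<pi>: "\<And>s s'. s \<notin> G \<Longrightarrow> s' \<in> G \<Longrightarrow> \<not> 0 < p s (\<pi> s) s'" by metis
  obtain s1 g where "s1 \<notin> G" "g \<in> G" using assms by blast
  moreover have "(s1, g) \<in> (policy_edges \<pi>)\<^sup>+" by (rule policy_edges_trancl)
  then have "s1 \<notin> G \<Longrightarrow> g \<notin> G"
    by (induction rule: trancl_induct) (use \<pi> in \<open>auto simp: policy_edges_def\<close>)
  ultimately show False by blast
qed

lemma card_forced_reach: "min (Suc k) CARD('s) \<le> card (forced_reach s1 k)"
proof (induction k)
  case (Suc k)
  have ne: "forced_reach s1 k \<noteq> {}" by (induction k) auto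
  show ?case
  proof (cases "forced_reach s1 k = UNIV")
    case False
    with ex_forced_entry[OF ne] have "forced_reach s1 k \<subset> forced_reach s1 (Suc k)" by auto
    then have "card (forced_reach s1 k) < card (forced_reach s1 (Suc k))"
      by (rule psubset_card_mono[OF finite])
    then show ?thesis using Suc by simp
  qed simp
qed simp

lemma forced_reach_CARD: "forced_reach s1 CARD('s) = UNIV"
proof -
  have "card (forced_reach s1 CARD('s)) = CARD('s)"
    using card_forced_reach[of "CARD('s)" s1] card_mono[of UNIV "forced_reach s1 CARD('s)"] by simp
  then show ?thesis by (intro card_eq_UNIV_imp_eq_UNIV) auto
qed

end

locale rel_flow = avg_opt_solution r p q \<rho>
  for r :: "'s::finite \<Rightarrow> 'a::finite \<Rightarrow> real" and p :: "'s \<Rightarrow> 'a \<Rightarrow> 's \<Rightarrow> real"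
    and q :: "real^('s \<times> 'a)" and \<rho> :: real +
  fixes y :: "real \<Rightarrow> real^('s \<times> 'a)"
  assumes flow:
    "\<And>t. 0 \<le> t \<Longrightarrow> (y has_vector_derivative (rel_bellman (y t) - y t)) (at t within {0..})"
begin

lemma component_has_derivative_within:
  "0 \<le> t \<Longrightarrow>
    ((\<lambda>t. y t $ j) has_real_derivative (rel_bellman (y t) $ j - y t $ j)) (at t within {0..})"
  using bounded_linear.has_vector_derivative[OF bounded_linear_vec_nth flow, of t j]
  by (simp add: has_real_derivative_iff_has_vector_derivative)

lemma component_has_derivative:
  "0 < t \<Longrightarrow> ((\<lambda>t. y t $ j) has_real_derivative (rel_bellman (y t) $ j - y t $ j)) (at t)"
  using has_vector_derivative_at_if_within_atLeast component_has_derivative_within[of t j]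
  by (simp add: has_real_derivative_iff_has_vector_derivative)

lemma continuous_on_component: "0 \<le> a \<Longrightarrow> continuous_on {a..} (\<lambda>t. y t $ j)"
  by (rule continuous_on_subset[of "{0..}"])
    (auto simp: continuous_on_eq_continuous_within
      intro: DERIV_continuous component_has_derivative_within)

lemma component_le_Max_initial: "0 \<le> t0 \<Longrightarrow> t0 \<le> t \<Longrightarrow> y t $ j \<le> (MAX k. y t0 $ k)"
  by (rule Max_component_nonincreasing[where D="\<lambda>j t. rel_bellman (y t) $ j - y t $ j"])
     (auto intro: continuous_on_component component_has_derivative rel_bellman_le_Max)

lemma Min_initial_le_component: "0 \<le> t0 \<Longrightarrow> t0 \<le> t \<Longrightarrow> (MIN k. y t0 $ k) \<le> y t $ j"
  by (rule Min_component_nondecreasing[where D="\<lambda>j t. rel_bellman (y t) $ j - y t $ j"])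
     (auto intro: continuous_on_component component_has_derivative Min_le_rel_bellman)

lemma Max_nonincreasing: "0 \<le> t0 \<Longrightarrow> t0 \<le> t \<Longrightarrow> (MAX j. y t $ j) \<le> (MAX j. y t0 $ j)"
  using component_le_Max_initial by (simp add: Max_UNIV_le_iff)

lemma Min_nondecreasing: "0 \<le> t0 \<Longrightarrow> t0 \<le> t \<Longrightarrow> (MIN j. y t0 $ j) \<le> (MIN j. y t $ j)"
  using Min_initial_le_component by (simp add: Min_ge_iff)

lemma rel_bellman_le_Max_initial: "0 \<le> t0 \<Longrightarrow> t0 \<le> t \<Longrightarrow> rel_bellman (y t) $ i \<le> (MAX k. y t0 $ k)"
  using rel_bellman_le_Max[of "y t" i] Max_nonincreasing[of t0 t] by linarith

lemma Min_initial_le_rel_bellman: "0 \<le> t0 \<Longrightarrow> t0 \<le> t \<Longrightarrow> (MIN k. y t0 $ k) \<le> rel_bellman (y t) $ i"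
  using Min_le_rel_bellman[of "y t" i] Min_nondecreasing[of t0 t] by linarith

lemma Max_gap_ode_bound:
  assumes "0 \<le> t0" "t0 \<le> a" "a \<le> b"
    and \<gamma>: "\<And>t. a < t \<Longrightarrow> t < b \<Longrightarrow> \<gamma> \<le> (MAX k. y t0 $ k) - rel_bellman (y t) $ i"
  shows "\<gamma> + ((MAX k. y t0 $ k) - y a $ i - \<gamma>) * exp (-(b - a)) \<le> (MAX k. y t0 $ k) - y b $ i"
proof (rule linear_ode_comparison[where D="\<lambda>t. - (rel_bellman (y t) $ i - y t $ i)"])
  show "continuous_on {a..b} (\<lambda>t. (MAX k. y t0 $ k) - y t $ i)"
    by (intro continuous_intros continuous_on_subset[OF continuous_on_component[of 0]])
      (use assms in auto)
  show "((\<lambda>t. (MAX k. y t0 $ k) - y t $ i)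
      has_real_derivative - (rel_bellman (y t) $ i - y t $ i)) (at t)"
    if "a < t" "t < b" for t
    using that assms by (auto intro!: derivative_eq_intros component_has_derivative)
  show "\<gamma> - ((MAX k. y t0 $ k) - y t $ i) \<le> - (rel_bellman (y t) $ i - y t $ i)" if "a < t" "t < b"
    for t
    using \<gamma>[OF that] by linarith
qed (use assms in auto)

lemma Max_gap_decay:
  assumes "0 \<le> t0" "t0 \<le> a" "a \<le> b"
  shows "((MAX k. y t0 $ k) - y a $ i) * exp (-(b - a)) \<le> (MAX k. y t0 $ k) - y b $ i"
  using Max_gap_ode_bound[OF assms, of 0 i] rel_bellman_le_Max_initial[of t0] assms by simp

lemma Max_gap_lift:
  assumes "0 \<le> t0" "t0 \<le> a" "a \<le> b"
    and "\<And>t. a < t \<Longrightarrow> t < b \<Longrightarrow> \<gamma> \<le> (MAX k. y t0 $ k) - rel_bellman (y t) $ i"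
  shows "\<gamma> * (1 - exp (-(b - a))) \<le> (MAX k. y t0 $ k) - y b $ i"
proof -
  define g where "g = (MAX k. y t0 $ k) - y a $ i"
  have "0 \<le> g * exp (-(b - a))" unfolding g_def using component_le_Max_initial assms by simp
  moreover have "\<gamma> * (1 - exp (-(b - a))) = \<gamma> + (g - \<gamma>) * exp (-(b - a)) - g * exp (-(b - a))"
    by (simp add: algebra_simps)
  ultimately show ?thesis using Max_gap_ode_bound[OF assms] unfolding g_def by linarith
qed

lemma Min_gap_ode_bound:
  assumes "0 \<le> t0" "t0 \<le> a" "a \<le> b"
    and \<gamma>: "\<And>t. a < t \<Longrightarrow> t < b \<Longrightarrow> \<gamma> \<le> rel_bellman (y t) $ i - (MIN k. y t0 $ k)"
  shows "\<gamma> + (y a $ i - (MIN k. y t0 $ k) - \<gamma>) * exp (-(b - a)) \<le> y b $ i - (MIN k. y t0 $ k)"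
proof (rule linear_ode_comparison[where D="\<lambda>t. rel_bellman (y t) $ i - y t $ i"])
  show "continuous_on {a..b} (\<lambda>t. y t $ i - (MIN k. y t0 $ k))"
    by (intro continuous_intros continuous_on_subset[OF continuous_on_component[of 0]])
      (use assms in auto)
  show "((\<lambda>t. y t $ i - (MIN k. y t0 $ k))
      has_real_derivative (rel_bellman (y t) $ i - y t $ i)) (at t)"
    if "a < t" "t < b" for t
    using that assms by (auto intro!: derivative_eq_intros component_has_derivative)
  show "\<gamma> - (y t $ i - (MIN k. y t0 $ k)) \<le> rel_bellman (y t) $ i - y t $ i" if "a < t" "t < b"
    for t
    using \<gamma>[OF that] by linarith
qed (use assms in auto)

lemma Min_gap_decay:
  assumes "0 \<le> t0" "t0 \<le> a" "a \<le> b"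
  shows "(y a $ i - (MIN k. y t0 $ k)) * exp (-(b - a)) \<le> y b $ i - (MIN k. y t0 $ k)"
  using Min_gap_ode_bound[OF assms, of 0 i] Min_initial_le_rel_bellman[of t0] assms by simp

lemma Min_gap_lift:
  assumes "0 \<le> t0" "t0 \<le> a" "a \<le> b"
    and "\<And>t. a < t \<Longrightarrow> t < b \<Longrightarrow> \<gamma> \<le> rel_bellman (y t) $ i - (MIN k. y t0 $ k)"
  shows "\<gamma> * (1 - exp (-(b - a))) \<le> y b $ i - (MIN k. y t0 $ k)"
proof -
  define g where "g = y a $ i - (MIN k. y t0 $ k)"
  have "0 \<le> g * exp (-(b - a))" unfolding g_def using Min_initial_le_component assms by simp
  moreover have "\<gamma> * (1 - exp (-(b - a))) = \<gamma> + (g - \<gamma>) * exp (-(b - a)) - g * exp (-(b - a))"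
    by (simp add: algebra_simps)
  ultimately show ?thesis using Min_gap_ode_bound[OF assms] unfolding g_def by linarith
qed

lemma rel_max_stays_high:
  assumes t0: "0 \<le> t0" and th: "0 < \<theta>"
    and high: "\<And>s. (MIN k. y t0 $ k) + \<theta> \<le> rel_max (y t0) s"
    and t: "t0 \<le> t" "t \<le> t0 + low_time \<theta>"
  shows "(MIN k. y t0 $ k) + \<theta> / 2 \<le> rel_max (y t) s"
proof -
  define m where "m = (MIN k. y t0 $ k)"
  define \<Delta> where "\<Delta> = low_time \<theta>"
  have \<Delta>: "0 < \<Delta>" "\<Delta> * (max_gap + \<theta>) = \<theta> / 2" using low_time_bounds[OF th] unfolding \<Delta>_def by auto
  obtain b where b: "rel_max (y t0) s = y t0 $ (s, b) - action_gap s b" using rel_max_attained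
    by blast
  define E where "E = exp (- (t - t0))"
  have decay: "(y t0 $ (s, b) - m) * E \<le> y t $ (s, b) - m"
    unfolding m_def E_def using Min_gap_decay[OF t0 order_refl t(1)] .
  have "1 - (t - t0) \<le> E" unfolding E_def using exp_ge_add_one_self[of "-(t - t0)"] by linarith
  then have E: "1 - \<Delta> \<le> E" "0 \<le> E" unfolding E_def using t \<Delta>_def by auto
  define g where "g = action_gap s b"
  have "(g + \<theta>) * \<Delta> \<le> (max_gap + \<theta>) * \<Delta>"
    using action_gap_le_max_gap[of s b] \<Delta> unfolding g_def by (intro mult_right_mono) auto
  moreover have "(g + \<theta>) * (1 - \<Delta>) = (g + \<theta>) - (g + \<theta>) * \<Delta>" by (simp add: algebra_simps)
  ultimately have "g + \<theta> / 2 \<le> (g + \<theta>) * (1 - \<Delta>)" using \<Delta>(2) by (simp add: mult.commute)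
  also have "\<dots> \<le> (g + \<theta>) * E"
    using E action_gap_nonneg[of s b] th unfolding g_def by (intro mult_left_mono) auto
  also have "\<dots> \<le> (y t0 $ (s, b) - m) * E"
    using high[of s] b E unfolding m_def g_def by (intro mult_right_mono) auto
  also have "\<dots> \<le> y t $ (s, b) - m" by (rule decay)
  finally have "action_gap s b + \<theta> / 2 \<le> y t $ (s, b) - m" unfolding g_def .
  then show ?thesis using rel_max_ge[of "y t" s b] unfolding m_def by linarith
qed

lemma Min_rises_if_rel_max_high:
  assumes t0: "0 \<le> t0" and th: "0 < \<theta>"
    and high: "\<And>s. (MIN k. y t0 $ k) + \<theta> \<le> rel_max (y t0) s"
  shows "(MIN k. y t0 $ k) + low_gain \<theta> \<le> y (t0 + low_time \<theta>) $ j"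
proof -
  define m where "m = (MIN k. y t0 $ k)"
  have "\<theta> / 2 * (1 - exp (- (t0 + low_time \<theta> - t0))) \<le> y (t0 + low_time \<theta>) $ j - m"
    unfolding m_def
  proof (rule Min_gap_lift[OF t0 order_refl])
    show "t0 \<le> t0 + low_time \<theta>" using low_time_bounds[OF th] by simp
    fix t assume "t0 < t" "t < t0 + low_time \<theta>"
    then have "m + \<theta> / 2 \<le> rel_bellman (y t) $ j"
      using rel_max_stays_high[OF t0 th high] unfolding m_def by (intro rel_bellman_ge) auto
    then show "\<theta> / 2 \<le> rel_bellman (y t) $ j - (MIN k. y t0 $ k)" unfolding m_def by simp
  qed
  then show ?thesis unfolding low_gain_def m_def by simp
qed

text \<open>A state whose value lies \<open>\<theta>\<close> below the maximum drags down, through transitions of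
  probability at least \<open>min_pos_p\<close>, every state that is forced to enter it; after \<open>epoch\<close>
  time units this has reached all components.\<close>

lemma rel_max_low_persists:
  assumes t0: "0 \<le> t0" and low: "rel_max (y t0) s \<le> (MAX j. y t0 $ j) - \<theta>"
    and t: "t0 \<le> t"
  shows "\<theta> * exp (- (t - t0)) \<le> (MAX j. y t0 $ j) - rel_max (y t) s"
proof -
  define M where "M = (MAX j. y t0 $ j)"
  obtain b where b: "rel_max (y t) s = y t $ (s, b) - action_gap s b" using rel_max_attained
    by blast
  define E where "E = exp (- (t - t0))"
  have E: "E \<le> 1" "0 \<le> E" unfolding E_def using t by auto
  have "\<theta> * E \<le> (M - y t0 $ (s, b) + action_gap s b) * E"
    using rel_max_ge[of "y t0" s b] low E unfolding M_def by (intro mult_right_mono) auto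
  also have "\<dots> = (M - y t0 $ (s, b)) * E + action_gap s b * E" by (simp add: algebra_simps)
  also have "\<dots> \<le> M - rel_max (y t) s"
    using Max_gap_decay[OF t0 order_refl t, of "(s, b)"]
      mult_left_le[OF E(1) action_gap_nonneg[of s b]] b
    unfolding M_def E_def by linarith
  finally show ?thesis unfolding E_def M_def .
qed

lemma rel_max_low_spreads:
  assumes t0: "0 \<le> t0" and \<gamma>: "0 \<le> \<gamma>" and a: "t0 \<le> a" and t: "a + 1 \<le> t" "t \<le> t0 + real epoch"
    and low: "\<And>t'. a < t' \<Longrightarrow> t' < a + 1 \<Longrightarrow> \<gamma> \<le> (MAX j. y t0 $ j) - rel_max (y t') s'"
    and edge: "0 < p s b s'"
  shows "\<gamma> * inflow_factor \<le> (MAX j. y t0 $ j) - y t $ (s, b)"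
proof -
  define M where "M = (MAX j. y t0 $ j)"
  have inflow: "min_pos_p * \<gamma> \<le> M - rel_bellman (y t') $ (s, b)" if t': "a < t'" "t' < a + 1" for t'
  proof -
    have nonneg: "0 \<le> M - rel_max (y t') s''" for s''
      unfolding M_def using component_le_Max_initial[OF t0] t' a by (simp add: rel_max_le)
    have "min_pos_p * \<gamma> \<le> p s b s' * (M - rel_max (y t') s')"
      using min_pos_p_le[OF edge] low[OF t'] \<gamma> min_pos_p_pos unfolding M_def
      by (intro mult_mono) auto
    also have "\<dots> \<le> (\<Sum>s''\<in>UNIV. p s b s'' * (M - rel_max (y t') s''))"
      by (rule member_le_sum) (auto intro: mult_nonneg_nonneg p_nonneg nonneg)
    also have "\<dots> = M - rel_bellman (y t') $ (s, b)"
      unfolding rel_bellman_nth by (simp add: right_diff_distrib sum_subtractf sum_p_mult_const)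
    finally show ?thesis .
  qed
  have "min_pos_p * \<gamma> * (1 - exp (- (a + 1 - a))) \<le> M - y (a + 1) $ (s, b)"
    unfolding M_def by (rule Max_gap_lift[OF t0 a]) (use inflow M_def in auto)
  then have lift: "min_pos_p * \<gamma> * (1 - exp (- 1)) \<le> M - y (a + 1) $ (s, b)" by simp
  have "0 \<le> min_pos_p * \<gamma> * (1 - exp (-1))" using \<gamma> min_pos_p_pos by simp
  moreover have "exp (- real epoch) \<le> exp (- (t - (a + 1)))" using a t by simp
  ultimately have "min_pos_p * \<gamma> * (1 - exp (-1)) * exp (- real epoch)
      \<le> (M - y (a + 1) $ (s, b)) * exp (- (t - (a + 1)))"
    using lift by (intro mult_mono) auto
  also have "\<dots> \<le> M - y t $ (s, b)"
    unfolding M_def by (rule Max_gap_decay) (use t0 a t in auto)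
  finally show ?thesis unfolding inflow_factor_def M_def by (simp add: algebra_simps)
qed

lemma forced_reach_rel_max_low:
  assumes t0: "0 \<le> t0" and th: "0 < \<theta>" and low: "rel_max (y t0) s1 \<le> (MAX j. y t0 $ j) - \<theta>"
  shows "k \<le> CARD('s) \<Longrightarrow> s \<in> forced_reach s1 k \<Longrightarrow> t0 + real k \<le> t \<Longrightarrow> t \<le> t0 + real epoch \<Longrightarrow>
    \<theta> * exp (- real epoch) * inflow_factor ^ k \<le> (MAX j. y t0 $ j) - rel_max (y t) s"
proof (induction k arbitrary: s t)
  case 0
  then have "\<theta> * exp (- (t - t0)) \<le> (MAX j. y t0 $ j) - rel_max (y t) s"
    using rel_max_low_persists[OF t0 low] by simp
  moreover have "\<theta> * exp (- real epoch) \<le> \<theta> * exp (- (t - t0))" using 0 th by simp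
  ultimately show ?case by simp
next
  case (Suc k)
  define \<gamma> where "\<gamma> = \<theta> * exp (- real epoch) * inflow_factor ^ k"
  have \<gamma>: "0 \<le> \<gamma>" unfolding \<gamma>_def using th inflow_factor_pos by simp
  have "\<gamma> * inflow_factor \<le> (MAX j. y t0 $ j) - rel_max (y t) s"
  proof (cases "s \<in> forced_reach s1 k")
    case True
    then have "\<gamma> \<le> (MAX j. y t0 $ j) - rel_max (y t) s" unfolding \<gamma>_def using Suc by simp
    moreover have "\<gamma> * inflow_factor \<le> \<gamma>" using \<gamma> inflow_factor_le_1 mult_left_le by blast
    ultimately show ?thesis by linarith
  next
    case False
    have "y t $ (s, b) \<le> (MAX j. y t0 $ j) - \<gamma> * inflow_factor" for b
    proof -
      obtain s' where s': "s' \<in> forced_reach s1 k" "0 < p s b s'" using False Suc.prems(2) by auto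
      have "\<gamma> * inflow_factor \<le> (MAX j. y t0 $ j) - y t $ (s, b)"
      proof (rule rel_max_low_spreads[OF t0 \<gamma> _ _ _ _ s'(2)])
        show "\<gamma> \<le> (MAX j. y t0 $ j) - rel_max (y t') s'"
          if "t0 + real k < t'" "t' < t0 + real k + 1" for t'
          unfolding \<gamma>_def using Suc.IH[OF _ s'(1)] Suc.prems that by simp
      qed (use Suc.prems in auto)
      then show ?thesis by simp
    qed
    then have "rel_max (y t) s \<le> (MAX j. y t0 $ j) - \<gamma> * inflow_factor" by (rule rel_max_le)
    then show ?thesis by linarith
  qed
  then show ?case unfolding \<gamma>_def by (simp add: algebra_simps)
qed

lemma Max_drops_if_rel_max_low:
  assumes t0: "0 \<le> t0" and th: "0 < \<theta>" and low: "rel_max (y t0) s1 \<le> (MAX j. y t0 $ j) - \<theta>"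
  shows "y (t0 + real epoch) $ i \<le> (MAX j. y t0 $ j) - up_gain \<theta>"
proof -
  define N where "N = CARD('s)"
  define \<gamma> where "\<gamma> = \<theta> * exp (- real epoch) * inflow_factor ^ N"
  have epoch: "real epoch = real N + 1" unfolding epoch_def N_def by simp
  have "\<gamma> * (1 - exp (- (t0 + real N + 1 - (t0 + real N))))
      \<le> (MAX j. y t0 $ j) - y (t0 + real N + 1) $ i"
  proof (rule Max_gap_lift[OF t0])
    fix t assume t: "t0 + real N < t" "t < t0 + real N + 1"
    have "\<gamma> \<le> (MAX j. y t0 $ j) - rel_max (y t) s'" for s'
      unfolding \<gamma>_def
      using forced_reach_rel_max_low[OF t0 th low, of N s' t] forced_reach_CARD t epoch
      unfolding N_def by simp
    then have "rel_max (y t) s' \<le> (MAX j. y t0 $ j) - \<gamma>" for s' by (simp add: algebra_simps)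
    then have "rel_bellman (y t) $ i \<le> (MAX j. y t0 $ j) - \<gamma>" by (rule rel_bellman_le)
    then show "\<gamma> \<le> (MAX j. y t0 $ j) - rel_bellman (y t) $ i" by linarith
  qed auto
  then show ?thesis unfolding up_gain_def \<gamma>_def N_def epoch by (simp add: algebra_simps)
qed

definition spread :: "real \<Rightarrow> real" where
  "spread t = (MAX j. y t $ j) - (MIN j. y t $ j)"

lemma spread_nonneg: "0 \<le> spread t"
  unfolding spread_def using Min_le_Max_UNIV[of "\<lambda>j. y t $ j"] by simp

lemma spread_antimono: "0 \<le> t0 \<Longrightarrow> t0 \<le> t \<Longrightarrow> spread t \<le> spread t0"
  unfolding spread_def using Max_nonincreasing[of t0 t] Min_nondecreasing[of t0 t] by linarith

lemma spread_contracts: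
  assumes t0: "0 \<le> t0" and th: "0 < \<theta>" and big: "2 * \<theta> \<le> spread t0"
  shows "spread (t0 + real epoch) \<le> spread t0 - min (low_gain \<theta>) (up_gain \<theta>)"
proof (cases "\<exists>s. rel_max (y t0) s \<le> (MAX j. y t0 $ j) - \<theta>")
  case True
  then obtain s1 where "rel_max (y t0) s1 \<le> (MAX j. y t0 $ j) - \<theta>" by blast
  then have "(MAX j. y (t0 + real epoch) $ j) \<le> (MAX j. y t0 $ j) - up_gain \<theta>"
    using Max_drops_if_rel_max_low[OF t0 th] by (simp add: Max_UNIV_le_iff)
  moreover have "(MIN j. y t0 $ j) \<le> (MIN j. y (t0 + real epoch) $ j)" using Min_nondecreasing t0
    by simp
  ultimately show ?thesis unfolding spread_def by linarith
next
  case False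
  have "(MIN j. y t0 $ j) + \<theta> \<le> rel_max (y t0) s" for s
  proof -
    have "\<not> rel_max (y t0) s \<le> (MAX j. y t0 $ j) - \<theta>" using False by blast
    then show ?thesis using big unfolding spread_def by linarith
  qed
  then have "(MIN j. y t0 $ j) + low_gain \<theta> \<le> (MIN j. y (t0 + low_time \<theta>) $ j)"
    using Min_rises_if_rel_max_high[OF t0 th] by (simp add: Min_ge_iff)
  also have "\<dots> \<le> (MIN j. y (t0 + real epoch) $ j)"
    using low_time_bounds[OF th] t0 by (intro Min_nondecreasing) (auto simp: epoch_def)
  finally have "(MIN j. y t0 $ j) + low_gain \<theta> \<le> (MIN j. y (t0 + real epoch) $ j)" .
  moreover have "(MAX j. y (t0 + real epoch) $ j) \<le> (MAX j. y t0 $ j)" using Max_nonincreasing t0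
    by simp
  ultimately show ?thesis unfolding spread_def by linarith
qed

lemma ex_spread_less: "0 < \<epsilon> \<Longrightarrow> \<exists>T\<ge>0. spread T < \<epsilon>"
proof (rule ccontr)
  assume e: "0 < \<epsilon>" and "\<not> (\<exists>T\<ge>0. spread T < \<epsilon>)"
  then have big: "2 * (\<epsilon> / 2) \<le> spread T" if "0 \<le> T" for T using that by force
  define c where "c = min (low_gain (\<epsilon> / 2)) (up_gain (\<epsilon> / 2))"
  have c: "0 < c" unfolding c_def using low_gain_pos up_gain_pos e by simp
  have iter: "spread (real n * real epoch) \<le> spread 0 - real n * c" for n
  proof (induction n)
    case (Suc n)
    have "spread (real n * real epoch + real epoch) \<le> spread (real n * real epoch) - c"
      unfolding c_def using e by (intro spread_contracts big) auto
    then show ?case using Suc by (simp add: algebra_simps)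
  qed simp
  obtain n where "spread 0 / c < real n" using reals_Archimedean2 by blast
  then have "spread 0 < real n * c" using c by (simp add: field_simps)
  then show False using iter[of n] spread_nonneg[of "real n * real epoch"] by linarith
qed

lemma tendsto_const_vector: "\<exists>L. \<forall>j. ((\<lambda>t. y t $ j) \<longlongrightarrow> L) at_top"
proof -
  define Mx where "Mx t = (MAX j. y t $ j)" for t
  have "(MIN j. y 0 $ j) \<le> Mx t" if "0 \<le> t" for t
    using Min_initial_le_component[of 0 t undefined] that Max_UNIV_ge[of "\<lambda>j. y t $ j" undefined]
    unfolding Mx_def by linarith
  then have bdd: "bdd_below (Mx ` {0..})" by (intro bdd_belowI[of _ "MIN j. y 0 $ j"]) auto
  define L where "L = Inf (Mx ` {0..})"
  have "((\<lambda>t. y t $ j) \<longlongrightarrow> L) at_top" for j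
  proof (rule tendstoI)
    fix e :: real assume e: "0 < e"
    obtain T1 where T1: "0 \<le> T1" "Mx T1 < L + e"
      using cInf_less_iff[OF _ bdd, of "L + e"] e unfolding L_def by auto
    obtain T2 where T2: "0 \<le> T2" "spread T2 < e" using ex_spread_less[OF e] by blast
    have "dist (y t $ j) L < e" if t: "max T1 T2 \<le> t" for t
    proof -
      have "L \<le> Mx t" unfolding L_def using t T1 by (intro cInf_lower[OF _ bdd]) auto
      moreover have "Mx t \<le> Mx T1" unfolding Mx_def using t T1 by (intro Max_nonincreasing) auto
      moreover have "spread t \<le> spread T2" using t T2 by (intro spread_antimono) auto
      moreover have "(MIN k. y t $ k) \<le> y t $ j" "y t $ j \<le> Mx t" unfolding Mx_def by simp_all
      moreover have "Mx t - spread t = (MIN k. y t $ k)" unfolding Mx_def spread_def by simp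
      ultimately show ?thesis using T1 T2 unfolding dist_real_def abs_less_iff by linarith
    qed
    then show "\<forall>\<^sub>F t in at_top. dist (y t $ j) L < e"
      unfolding eventually_at_top_linorder by blast
  qed
  then show ?thesis by blast
qed

end

section \<open>The clipped ODE\<close>

lemma clip_id: "\<bar>\<rho>\<bar> \<le> R \<Longrightarrow> 0 < \<eta> \<Longrightarrow> clip R \<eta> \<rho> = \<rho>"
  unfolding clip_def by (auto simp: max_def min_def abs_le_iff)

lemma clip_mono: "x \<le> x' \<Longrightarrow> clip R \<eta> x \<le> clip R \<eta> x'"
  unfolding clip_def by (auto simp: max_def min_def)

lemma continuous_on_clip: "continuous_on S (clip R \<eta>)"
  unfolding clip_def by (intro continuous_intros)

lemma clip_add_sub_le:
  "a \<le> - c \<Longrightarrow> 0 < c \<Longrightarrow> \<bar>\<rho>\<bar> \<le> R \<Longrightarrow> 0 < \<eta> \<Longrightarrow> clip R \<eta> (\<rho> + a) - \<rho> \<le> - min c \<eta>"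
  unfolding clip_def by (auto simp: max_def min_def abs_le_iff)

lemma clip_add_sub_ge:
  "c \<le> a \<Longrightarrow> 0 < c \<Longrightarrow> \<bar>\<rho>\<bar> \<le> R \<Longrightarrow> 0 < \<eta> \<Longrightarrow> min c \<eta> \<le> clip R \<eta> (\<rho> + a) - \<rho>"
  unfolding clip_def by (auto simp: max_def min_def abs_le_iff)

text \<open>The clipped restoring force of \<open>\<zeta>' = clip (\<rho> + \<epsilon> - u \<zeta>) - \<rho>\<close> is bounded away from zero
  outside any neighbourhood of \<open>0\<close> once the perturbation \<open>\<epsilon>\<close> is small; the clipping level
  \<open>R + \<eta>\<close> lies strictly beyond \<open>\<bar>\<rho>\<bar>\<close>.\<close>

lemma clipped_ode_tendsto_0:
  fixes \<zeta> \<epsilon> :: "real \<Rightarrow> real"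
  assumes cont: "continuous_on {0..} \<zeta>"
    and der: "\<And>t. 0 < t \<Longrightarrow> (\<zeta> has_real_derivative (clip R \<eta> (\<rho> + \<epsilon> t - u * \<zeta> t) - \<rho>)) (at t)"
    and \<epsilon>: "(\<epsilon> \<longlongrightarrow> 0) at_top" and u: "0 < u" and \<eta>: "0 < \<eta>" and \<rho>: "\<bar>\<rho>\<bar> \<le> R"
  shows "(\<zeta> \<longlongrightarrow> 0) at_top"
proof (rule tendstoI)
  fix e :: real assume e: "0 < e"
  define \<beta> where "\<beta> = e / 2"
  define \<kappa> where "\<kappa> = min (u * \<beta> / 2) \<eta>"
  have \<beta>: "0 < \<beta>" and \<kappa>: "0 < \<kappa>" unfolding \<beta>_def \<kappa>_def using u e \<eta> by auto
  have "\<forall>\<^sub>F t in at_top. dist (\<epsilon> t) 0 < u * \<beta> / 2" using u \<beta> by (intro tendstoD[OF \<epsilon>]) simp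
  then obtain T where "\<And>t. T \<le> t \<Longrightarrow> \<bar>\<epsilon> t\<bar> < u * \<beta> / 2" unfolding eventually_at_top_linorder by auto
  then obtain T0 where T0: "0 \<le> T0" "\<And>t. T0 \<le> t \<Longrightarrow> \<bar>\<epsilon> t\<bar> < u * \<beta> / 2"
    by (metis max.cobounded1 max.cobounded2 order_trans)
  define D where "D t = clip R \<eta> (\<rho> + \<epsilon> t - u * \<zeta> t) - \<rho>" for t
  have cont0: "continuous_on {T0..} \<zeta>" by (rule continuous_on_subset[OF cont]) (use T0 in auto)
  have der0: "(\<zeta> has_real_derivative D t) (at t)" if "T0 < t" for t
    unfolding D_def using der that T0 by auto
  have "\<exists>t1. \<forall>t\<ge>t1. \<zeta> t \<le> \<beta>"
  proof (rule eventually_always_below[OF cont0 der0 _ \<kappa>])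
    fix t assume t: "T0 < t" "\<beta> \<le> \<zeta> t"
    then have "u * \<beta> \<le> u * \<zeta> t" using u by simp
    then have "\<epsilon> t - u * \<zeta> t \<le> - (u * \<beta> / 2)" using T0(2)[of t] t by (simp add: abs_less_iff)
    from clip_add_sub_le[OF this _ \<rho> \<eta>] show "D t \<le> - \<kappa>"
      unfolding D_def \<kappa>_def using u \<beta> by (simp add: add_diff_eq)
  qed
  moreover have "\<exists>t2. \<forall>t\<ge>t2. - \<zeta> t \<le> \<beta>"
  proof (rule eventually_always_below[where D="\<lambda>t. - D t", OF _ _ _ \<kappa>])
    show "continuous_on {T0..} (\<lambda>t. - \<zeta> t)" by (intro continuous_intros cont0)
    show "((\<lambda>t. - \<zeta> t) has_real_derivative - D t) (at t)" if "T0 < t" for t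
      by (intro derivative_intros der0 that)
    fix t assume t: "T0 < t" "\<beta> \<le> - \<zeta> t"
    then have "u * \<beta> \<le> u * - \<zeta> t" using u by (intro mult_left_mono) auto
    then have "u * \<beta> / 2 \<le> \<epsilon> t - u * \<zeta> t" using T0(2)[of t] t by (simp add: abs_less_iff)
    from clip_add_sub_ge[OF this _ \<rho> \<eta>] show "- D t \<le> - \<kappa>"
      unfolding D_def \<kappa>_def using u \<beta> by (simp add: add_diff_eq)
  qed
  ultimately obtain t1 t2 where t12: "\<And>t. t1 \<le> t \<Longrightarrow> \<zeta> t \<le> \<beta>" "\<And>t. t2 \<le> t \<Longrightarrow> - \<zeta> t \<le> \<beta>"
    by blast
  have "dist (\<zeta> t) 0 < e" if "max t1 t2 \<le> t" for t
    using t12[of t] that \<beta> unfolding \<beta>_def dist_real_def abs_less_iff by auto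
  then have "\<forall>t\<ge>max t1 t2. dist (\<zeta> t) 0 < e" by blast
  then show "\<forall>\<^sub>F t in at_top. dist (\<zeta> t) 0 < e" unfolding eventually_at_top_linorder by blast
qed

locale clipped_q_ode = avg_opt_solution r p q \<rho>
  for r :: "'s::finite \<Rightarrow> 'a::finite \<Rightarrow> real" and p :: "'s \<Rightarrow> 'a \<Rightarrow> 's \<Rightarrow> real"
    and q :: "real^('s \<times> 'a)" and \<rho> :: real +
  fixes f :: "real^('s \<times> 'a) \<Rightarrow> real" and u \<eta> C :: real
  assumes lipschitz: "C-lipschitz_on UNIV f" and u_pos: "0 < u"
    and f_shift: "\<And>x c. f (x + c *\<^sub>R allones) = f x + c * u"
    and eta_pos: "0 < \<eta>" and f_q: "f q = \<rho>"
begin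

definition F :: "real^('s \<times> 'a) \<Rightarrow> real^('s \<times> 'a)" where
  "F Q = Tbell r p Q - clip (rnorm r) \<eta> (f Q) *\<^sub>R allones - Q"

lemma F_q: "F q = 0"
  unfolding F_def Tbell_solution f_q clip_id[OF abs_gain_le_rnorm eta_pos] by simp

lemma F_eq_rel_bellman:
  "F Q = rel_bellman (Q - q + k *\<^sub>R allones) - (Q - q + k *\<^sub>R allones)
    - (clip (rnorm r) \<eta> (f Q) - \<rho>) *\<^sub>R allones"
proof -
  define y where "y = Q - q + k *\<^sub>R allones"
  have "Q = (q + y) + (- k) *\<^sub>R allones" unfolding y_def by (simp add: algebra_simps)
  then have "Tbell r p Q = q + \<rho> *\<^sub>R allones + rel_bellman y + (- k) *\<^sub>R allones"
    using Tbell_add_const Tbell_solution_add by metis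
  then show ?thesis unfolding F_def y_def by (simp add: algebra_simps)
qed

text \<open>A solution \<open>Q\<close> splits as \<open>Q t = q + rel_part Q t - shift Q t \<cdot> e\<close>: the relative part
  follows the relative flow, which converges to a constant vector, while the shift along \<open>e\<close>
  integrates the clipped mismatch \<open>clip (f (Q t)) - \<rho>\<close>.\<close>

definition shift :: "(real \<Rightarrow> real^('s \<times> 'a)) \<Rightarrow> real \<Rightarrow> real" where
  "shift Q t = integral {0..t} (\<lambda>s. clip (rnorm r) \<eta> (f (Q s)) - \<rho>)"

definition rel_part :: "(real \<Rightarrow> real^('s \<times> 'a)) \<Rightarrow> real \<Rightarrow> real^('s \<times> 'a)" where
  "rel_part Q t = Q t - q + shift Q t *\<^sub>R allones"

lemma solution_eq: "Q t = q + rel_part Q t - shift Q t *\<^sub>R allones"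
  unfolding rel_part_def by simp

lemma f_solution: "f (Q t) = f (q + rel_part Q t) - shift Q t * u"
  using f_shift[of "q + rel_part Q t" "- shift Q t"] solution_eq[of Q t] by simp

lemma shift_at_0: "shift Q 0 = 0"
  unfolding shift_def by simp

context
  fixes Q :: "real \<Rightarrow> real^('s \<times> 'a)"
  assumes sol: "ode_solution F Q"
begin

lemma solution_has_derivative: "0 \<le> t \<Longrightarrow> (Q has_vector_derivative F (Q t)) (at t within {0..})"
  using sol unfolding ode_solution_def by blast

lemma shift_has_derivative_within:
  "0 \<le> t \<Longrightarrow> (shift Q has_real_derivative (clip (rnorm r) \<eta> (f (Q t)) - \<rho>)) (at t within {0..})"
proof -
  have "continuous_on {0..} Q"
    unfolding continuous_on_eq_continuous_within
    using solution_has_derivative has_vector_derivative_continuous by blast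
  then have "continuous_on {0..} (\<lambda>s. f (Q s))"
    by (rule continuous_on_compose2[OF lipschitz_on_continuous_on[OF lipschitz]]) auto
  then have "continuous_on {0..} (\<lambda>s. clip (rnorm r) \<eta> (f (Q s)) - \<rho>)"
    by (intro continuous_intros continuous_on_compose2[OF continuous_on_clip]) auto
  then show "0 \<le> t \<Longrightarrow> ?thesis" unfolding shift_def by (rule has_real_derivative_integral_atLeast)
qed

lemma shift_has_derivative:
  "0 < t \<Longrightarrow> (shift Q has_real_derivative (clip (rnorm r) \<eta> (f (Q t)) - \<rho>)) (at t)"
  using has_vector_derivative_at_if_within_atLeast shift_has_derivative_within[of t]
  by (simp add: has_real_derivative_iff_has_vector_derivative)

lemma continuous_on_shift: "continuous_on {0..} (shift Q)"
  unfolding continuous_on_eq_continuous_within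
  using shift_has_derivative_within DERIV_continuous by blast

lemma rel_flow_rel_part: "rel_flow r p q \<rho> (rel_part Q)"
proof unfold_locales
  fix t :: real assume t: "0 \<le> t"
  have "(rel_part Q has_vector_derivative
      F (Q t) + (clip (rnorm r) \<eta> (f (Q t)) - \<rho>) *\<^sub>R allones) (at t within {0..})"
    unfolding rel_part_def
    by (auto intro!: derivative_eq_intros solution_has_derivative shift_has_derivative_within t
        simp: has_real_derivative_iff_has_vector_derivative[symmetric])
  then show "(rel_part Q has_vector_derivative rel_bellman (rel_part Q t) - rel_part Q t)
      (at t within {0..})"
    unfolding F_eq_rel_bellman[of _ "shift Q t"] rel_part_def by simp
qed

interpretation rel: rel_flow r p q \<rho> "rel_part Q"
  by (rule rel_flow_rel_part)

lemma solution_tendsto: "(Q \<longlongrightarrow> q) at_top"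
proof -
  obtain L where L: "\<And>j. ((\<lambda>t. rel_part Q t $ j) \<longlongrightarrow> L) at_top" using rel.tendsto_const_vector
    by blast
  have rel_lim: "(rel_part Q \<longlongrightarrow> L *\<^sub>R allones) at_top"
    by (rule vec_tendstoI) (simp add: allones_def L)
  have "((\<lambda>t. f (q + rel_part Q t)) \<longlongrightarrow> f (q + L *\<^sub>R allones)) at_top"
    by (rule continuous_on_tendsto_compose[OF lipschitz_on_continuous_on[OF lipschitz]])
      (auto intro!: tendsto_intros rel_lim)
  moreover have "f (q + L *\<^sub>R allones) = \<rho> + L * u" using f_shift f_q by simp
  ultimately have "((\<lambda>t. f (q + rel_part Q t) - (\<rho> + L * u)) \<longlongrightarrow> (\<rho> + L * u) - (\<rho> + L * u)) at_top"
    by (intro tendsto_diff tendsto_const) simp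
  then have \<epsilon>: "((\<lambda>t. f (q + rel_part Q t) - \<rho> - L * u) \<longlongrightarrow> 0) at_top" by (simp add: diff_diff_eq)
  have "((\<lambda>t. shift Q t - L) \<longlongrightarrow> 0) at_top"
  proof (rule clipped_ode_tendsto_0[OF _ _ \<epsilon> u_pos eta_pos abs_gain_le_rnorm])
    show "continuous_on {0..} (\<lambda>t. shift Q t - L)"
      by (intro continuous_intros continuous_on_shift)
    fix t :: real assume "0 < t"
    moreover have "\<rho> + (f (q + rel_part Q t) - \<rho> - L * u) - u * (shift Q t - L) = f (Q t)"
      unfolding f_solution[of Q t] by (simp add: algebra_simps)
    ultimately show "((\<lambda>t. shift Q t - L) has_real_derivative clip (rnorm r) \<eta>
        (\<rho> + (f (q + rel_part Q t) - \<rho> - L * u) - u * (shift Q t - L)) - \<rho>) (at t)"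
      by (auto intro!: derivative_eq_intros shift_has_derivative)
  qed
  then have "((\<lambda>t. (shift Q t - L) + L) \<longlongrightarrow> 0 + L) at_top" by (intro tendsto_intros)
  then have "(shift Q \<longlongrightarrow> L) at_top" by simp
  then have "((\<lambda>t. q + rel_part Q t - shift Q t *\<^sub>R allones)
      \<longlongrightarrow> q + L *\<^sub>R allones - L *\<^sub>R allones) at_top"
    by (intro tendsto_intros rel_lim)
  moreover have "(\<lambda>t. q + rel_part Q t - shift Q t *\<^sub>R allones) = Q"
    by (rule ext) (rule solution_eq[symmetric])
  ultimately show ?thesis by simp
qed

lemma abs_rel_part_le: "0 \<le> s \<Longrightarrow> \<bar>rel_part Q s $ j\<bar> \<le> norm (Q 0 - q)"
proof -
  assume s: "0 \<le> s"
  have abs: "\<bar>rel_part Q 0 $ k\<bar> \<le> norm (Q 0 - q)" for k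
    unfolding rel_part_def shift_at_0 using component_le_norm_cart[of "Q 0 - q" k] by simp
  have "rel_part Q 0 $ k \<le> norm (Q 0 - q)" "- norm (Q 0 - q) \<le> rel_part Q 0 $ k" for k
    using abs_le_D1[OF abs[of k]] abs_le_D2[OF abs[of k]] by linarith+
  then have "(MAX k. rel_part Q 0 $ k) \<le> norm (Q 0 - q)"
    "- norm (Q 0 - q) \<le> (MIN k. rel_part Q 0 $ k)"
    by (simp_all add: Max_UNIV_le_iff Min_ge_iff)
  then show ?thesis
    using rel.component_le_Max_initial[of 0 s j] rel.Min_initial_le_component[of 0 s j] s
    by linarith
qed

lemma norm_rel_part_le:
  assumes s: "0 \<le> s"
  shows "norm (rel_part Q s) \<le> CARD('s \<times> 'a) * norm (Q 0 - q)"
proof -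
  have "norm (rel_part Q s) \<le> (\<Sum>j\<in>UNIV. \<bar>rel_part Q s $ j\<bar>)" by (rule norm_le_l1_cart)
  also have "\<dots> \<le> (\<Sum>j\<in>(UNIV :: ('s \<times> 'a) set). norm (Q 0 - q))"
    by (rule sum_mono) (rule abs_rel_part_le[OF s])
  finally show ?thesis by simp
qed

text \<open>The shift is held in check because \<open>f\<close> is Lipschitz and the relative part stays small:
  beyond the level \<open>B\<close> the clipped mismatch pushes the shift back.\<close>

lemma abs_shift_le: "0 \<le> s \<Longrightarrow> \<bar>shift Q s\<bar> \<le> C * CARD('s \<times> 'a) * norm (Q 0 - q) / u"
proof -
  assume s: "0 \<le> s"
  define B where "B = C * CARD('s \<times> 'a) * norm (Q 0 - q) / u"
  have B: "0 \<le> B" unfolding B_def using lipschitz_on_nonneg[OF lipschitz] u_pos by simp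
  have f_near: "\<bar>f (Q t) - \<rho> + shift Q t * u\<bar> \<le> B * u" if "0 \<le> t" for t
  proof -
    have "\<bar>f (q + rel_part Q t) - f q\<bar> \<le> C * norm (rel_part Q t)"
      using lipschitz_on_normD[OF lipschitz, of "q + rel_part Q t" q] by simp
    also have "\<dots> \<le> B * u" unfolding B_def
      using mult_left_mono[OF norm_rel_part_le[OF that] lipschitz_on_nonneg[OF lipschitz]] u_pos
      by (simp add: mult.assoc)
    finally show ?thesis using f_solution[of Q t] f_q by simp
  qed
  have clip_\<rho>: "clip (rnorm r) \<eta> \<rho> = \<rho>" by (rule clip_id[OF abs_gain_le_rnorm eta_pos])
  have "shift Q s \<le> B"
  proof (rule stays_below[OF continuous_on_shift shift_has_derivative _ _ s])
    fix t assume t: "0 < t" "B < shift Q t"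
    then have "B * u < shift Q t * u" using u_pos by simp
    then have "f (Q t) \<le> \<rho>" using f_near[of t] t by (simp add: abs_le_iff)
    then have "clip (rnorm r) \<eta> (f (Q t)) \<le> clip (rnorm r) \<eta> \<rho>" by (rule clip_mono)
    then show "clip (rnorm r) \<eta> (f (Q t)) - \<rho> \<le> 0" using clip_\<rho> by simp
  next
    show "shift Q 0 \<le> B" unfolding shift_at_0 by (rule B)
  qed
  moreover have "- shift Q s \<le> B"
  proof (rule stays_below[of 0 "\<lambda>t. - shift Q t" "\<lambda>t. - (clip (rnorm r) \<eta> (f (Q t)) - \<rho>)"])
    show "continuous_on {0..} (\<lambda>t. - shift Q t)"
      by (intro continuous_intros continuous_on_shift)
    show "((\<lambda>t. - shift Q t) has_real_derivative - (clip (rnorm r) \<eta> (f (Q t)) - \<rho>)) (at t)"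
      if "0 < t" for t
      by (intro derivative_intros shift_has_derivative[OF that])
    fix t assume t: "0 < t" "B < - shift Q t"
    then have "B * u < - shift Q t * u" using u_pos by (intro mult_strict_right_mono) auto
    then have "\<rho> \<le> f (Q t)" using f_near[of t] t by (simp add: abs_le_iff)
    then have "clip (rnorm r) \<eta> \<rho> \<le> clip (rnorm r) \<eta> (f (Q t))" by (rule clip_mono)
    then show "- (clip (rnorm r) \<eta> (f (Q t)) - \<rho>) \<le> 0" using clip_\<rho> by simp
  qed (use shift_at_0 B s in auto)
  ultimately show ?thesis unfolding B_def by simp
qed

lemma dist_solution_le:
  assumes t: "0 \<le> t"
  shows "dist (Q t) q \<le> CARD('s \<times> 'a) * (1 + C * CARD('s \<times> 'a) / u) * dist (Q 0) q"
proof -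
  define n where "n = real CARD('s \<times> 'a)"
  have "norm (allones :: real^('s \<times> 'a)) \<le> n"
    using norm_le_l1_cart[of "allones :: real^('s \<times> 'a)"] unfolding n_def allones_def by simp
  then have "\<bar>shift Q t\<bar> * norm (allones :: real^('s \<times> 'a)) \<le> C * n * norm (Q 0 - q) / u * n"
    using abs_shift_le[OF t] lipschitz_on_nonneg[OF lipschitz] u_pos unfolding n_def
    by (intro mult_mono) auto
  moreover have
    "dist (Q t) q \<le> norm (rel_part Q t) + \<bar>shift Q t\<bar> * norm (allones :: real^('s \<times> 'a))"
    using solution_eq[of Q t] norm_triangle_ineq4[of "rel_part Q t" "shift Q t *\<^sub>R allones"]
    by (simp add: dist_norm)
  ultimately have "dist (Q t) q \<le> n * norm (Q 0 - q) + C * n * norm (Q 0 - q) / u * n"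
    using norm_rel_part_le[OF t] unfolding n_def by linarith
  then show ?thesis unfolding n_def dist_norm by (simp add: algebra_simps)
qed

end

lemma solution_stable:
  assumes e: "0 < \<epsilon>"
  shows "\<exists>\<delta>>0. \<forall>Q. ode_solution F Q \<and> dist (Q 0) q < \<delta> \<longrightarrow> (\<forall>t\<ge>0. dist (Q t) q < \<epsilon>)"
proof -
  define K where "K = CARD('s \<times> 'a) * (1 + C * CARD('s \<times> 'a) / u)"
  have K: "0 < K" unfolding K_def using lipschitz_on_nonneg[OF lipschitz] u_pos
    by (simp add: add_pos_nonneg)
  have "dist (Q t) q < \<epsilon>" if "ode_solution F Q" "dist (Q 0) q < \<epsilon> / K" "0 \<le> t" for Q t
  proof -
    have "dist (Q t) q \<le> K * dist (Q 0) q" unfolding K_def by (rule dist_solution_le[OF that(1,3)])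
    also have "\<dots> < K * (\<epsilon> / K)" using that(2) K by (intro mult_strict_left_mono) auto
    finally show ?thesis using K by simp
  qed
  moreover have "0 < \<epsilon> / K" using e K by simp
  ultimately show ?thesis by blast
qed

lemma globally_asymptotically_stable_F: "globally_asymptotically_stable F q"
  unfolding globally_asymptotically_stable_def using F_q solution_stable solution_tendsto by blast

end

theorem lemma2:
  fixes r :: "'s::finite \<Rightarrow> 'a::finite \<Rightarrow> real"
    and p :: "'s \<Rightarrow> 'a \<Rightarrow> 's \<Rightarrow> real"
    and f :: "real ^ ('s \<times> 'a) \<Rightarrow> real"
    and u \<eta> :: real
  assumes mdp: "is_mdp p"
    and erg: "ergodic_mdp p"
    and lip: "\<exists>C. C-lipschitz_on UNIV f"
    and u_pos: "u > 0"
    and f_e: "f allones = u"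
    and f_shift: "\<And>x c. f (x + c *\<^sub>R allones) = f x + c * u"
    and f_hom: "\<And>x c. f (c *\<^sub>R x) = c * f x"
    and eta: "\<eta> > 0"
  shows "\<exists>q \<rho>. (\<forall>s0. opt_avg_reward r p s0 = \<rho>)
      \<and> (\<forall>s a. q $ (s, a) = r s a - \<rho> + (\<Sum>s'\<in>UNIV. p s a s' * (MAX a'. q $ (s', a'))))
      \<and> \<rho> = f q
      \<and> (\<forall>q'. (\<forall>s a. q' $ (s, a) = r s a - \<rho> + (\<Sum>s'\<in>UNIV. p s a s' * (MAX a'. q' $ (s', a'))))
              \<and> \<rho> = f q' \<longrightarrow> q' = q)
      \<and> globally_asymptotically_stable
          (\<lambda>Q. Tbell r p Q - clip (rnorm r) \<eta> (f Q) *\<^sub>R allones - Q) q"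
proof -
  interpret ergodic_mdp_model r p using mdp erg by unfold_locales
  obtain C where C: "C-lipschitz_on UNIV f" using lip by blast
  obtain q \<rho> where q: "avg_optimality_eq r p q \<rho>" and f_q: "f q = \<rho>"
    using ex_normalized_avg_optimality_solution[OF u_pos f_shift] by blast
  interpret clipped_q_ode r p q \<rho> f u \<eta> C
    using mdp erg q C u_pos f_shift eta f_q by unfold_locales
  have F_eq: "(\<lambda>Q. Tbell r p Q - clip (rnorm r) \<eta> (f Q) *\<^sub>R allones - Q) = F"
    by (simp add: fun_eq_iff F_def)
  show ?thesis
    unfolding avg_optimality_eq_iff[symmetric] F_eq
  proof (intro exI conjI)
    show "\<forall>s0. opt_avg_reward r p s0 = \<rho>" using opt_avg_reward_eq_gain by blast
    show "avg_optimality_eq r p q \<rho>" by (rule q)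
    show "\<rho> = f q" using f_q by simp
    show "\<forall>q'. avg_optimality_eq r p q' \<rho> \<and> \<rho> = f q' \<longrightarrow> q' = q"
      using normalized_avg_optimality_solution_unique[OF u_pos f_shift _ _ q f_q]
      by (metis (full_types))
    show "globally_asymptotically_stable F q" by (rule globally_asymptotically_stable_F)
  qed
qed

end
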